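(* Let $\alpha>0$ and let $\mu$ be a positive Borel measure on $(0,\infty)$ such that $\mu((0,1))=0$ and $\sup_{n\in\mathbb{N}}\int_{1}^{\infty}t^{-(n+1)}\,d\mu(t)<\infty$. Then the Hausdorff operator $\mathcal{H}_{\mu}$ is compact on $F^{2}_{\alpha}$ if and only if $$\lim_{n\to\infty}\int_{1}^{\infty}\frac{1}{t^{n+1}}\,d\mu(t)=0.$$
   Context: $\mathbb{N}=\{0,1,2,\dots\}$. The Fock space $F^2_\alpha$ is the Hilbert space of entire functions $f$ with $\|f\|^2=\frac{\alpha}{\pi}\int_{\mathbb{C}}|f(z)|^2e^{-\alpha|z|^2}\,dA(z)<\infty$, where $dA$ is Lebesgue area measure. For a positive Borel measure $\mu$ on $(0,\infty)$, the Hausdorff operator is $\mathcal{H}_{\mu}(f)(z)=\int_{0}^{\infty}\frac{1}{t}f\left(\frac{z}{t}\right)d\mu(t)$, $z\in\mathbb{C}$. *)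

theory Defs
  imports "HOL-Complex_Analysis.Complex_Analysis"
begin

definition fock_space :: "real \<Rightarrow> (complex \<Rightarrow> complex) set" where
  "fock_space \<alpha> = {f. f holomorphic_on UNIV \<and>
      integrable lborel (\<lambda>z. (cmod (f z))\<^sup>2 * exp (- \<alpha> * (cmod z)\<^sup>2))}"

definition fock_norm :: "real \<Rightarrow> (complex \<Rightarrow> complex) \<Rightarrow> real" where
  "fock_norm \<alpha> f = sqrt (\<alpha> / pi * integral\<^sup>L lborel (\<lambda>z. (cmod (f z))\<^sup>2 * exp (- \<alpha> * (cmod z)\<^sup>2)))"

definition hausdorff_op :: "real measure \<Rightarrow> (complex \<Rightarrow> complex) \<Rightarrow> complex \<Rightarrow> complex" where
  "hausdorff_op \<mu> f z = (LINT t:{0<..}|\<mu>. f (z / complex_of_real t) / complex_of_real t)"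

definition compact_on_fock :: "real \<Rightarrow> ((complex \<Rightarrow> complex) \<Rightarrow> (complex \<Rightarrow> complex)) \<Rightarrow> bool" where
  "compact_on_fock \<alpha> T \<longleftrightarrow>
     (\<forall>f\<in>fock_space \<alpha>. T f \<in> fock_space \<alpha>) \<and>
     (\<forall>fs :: nat \<Rightarrow> complex \<Rightarrow> complex. (\<forall>n. fs n \<in> fock_space \<alpha>) \<and> bounded (range (\<lambda>n. fock_norm \<alpha> (fs n))) \<longrightarrow>
        (\<exists>r g. strict_mono r \<and> g \<in> fock_space \<alpha> \<and>
               (\<lambda>k. fock_norm \<alpha> (T (fs (r k)) - g)) \<longlonglongrightarrow> 0))"

end

theory Submission
  imports Defs "HOL-Probability.Distributions" "HOL-Library.Diagonal_Subsequence"
begin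

text \<open>
  Rotations preserve Lebesgue measure on the plane and the Gaussian weight, so the monomials
  z^k are orthogonal in F^2_alpha, and an entire function with Taylor coefficients c_k has squared
  norm (alpha / pi) * sum_k |c_k|^2 gamma_k, where gamma_k is the k-th Gaussian moment.
  Since mu lives on [1, infinity), the Hausdorff operator maps z^k to a_k z^k with
  a_k = int t^-(k+1) dmu: it is a diagonal operator with decreasing non-negative diagonal on this
  weighted sequence space. If a_k -> 0, a diagonal subsequence of a bounded sequence converges
  coordinatewise, and the uniformly small tails turn this into norm convergence of the images;
  otherwise the images of the normalised monomials have no convergent subsequence.
\<close>

section \<open>Diagonal operators on weighted sequence spaces\<close>

lemma decseq_tendsto_if_subseq_tendsto:
  fixes a :: "nat \<Rightarrow> real"
  assumes "decseq a" "bdd_below (range a)" "strict_mono r" "(a \<circ> r) \<longlonglongrightarrow> L"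
  shows "a \<longlonglongrightarrow> L"
proof -
  have lim: "a \<longlonglongrightarrow> Inf (range a)"
    using assms(1,2) by (rule LIMSEQ_decseq_INF[rotated])
  then have "(a \<circ> r) \<longlonglongrightarrow> Inf (range a)"
    using assms(3) by (rule LIMSEQ_subseq_LIMSEQ)
  with assms(4) have "L = Inf (range a)"
    by (rule LIMSEQ_unique)
  with lim show ?thesis
    by simp
qed

lemma summable_weighted_mult_bounded:
  fixes c :: "nat \<Rightarrow> complex" and a w :: "nat \<Rightarrow> real"
  assumes "\<And>k. \<bar>a k\<bar> \<le> M" "\<And>k. w k \<ge> 0" "summable (\<lambda>k. (cmod (c k))\<^sup>2 * w k)"
  shows "summable (\<lambda>k. (cmod (of_real (a k) * c k))\<^sup>2 * w k)"
proof (rule summable_comparison_test')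
  show "summable (\<lambda>k. M\<^sup>2 * ((cmod (c k))\<^sup>2 * w k))"
    using assms(3) by (rule summable_mult)
  fix k
  have "(cmod (of_real (a k) * c k))\<^sup>2 = (a k)\<^sup>2 * (cmod (c k))\<^sup>2"
    by (simp add: norm_mult power_mult_distrib)
  also have "\<dots> \<le> M\<^sup>2 * (cmod (c k))\<^sup>2"
    using assms(1)[of k] by (intro mult_right_mono) (auto simp: abs_le_square_iff[symmetric])
  finally show "norm ((cmod (of_real (a k) * c k))\<^sup>2 * w k) \<le> M\<^sup>2 * ((cmod (c k))\<^sup>2 * w k)"
    using assms(2)[of k] by (simp add: mult_right_mono mult.assoc[symmetric])
qed

lemma summable_weighted_diff:
  fixes c d :: "nat \<Rightarrow> complex" and w :: "nat \<Rightarrow> real"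
  assumes w: "\<And>k. w k \<ge> 0"
    and c: "summable (\<lambda>k. (cmod (c k))\<^sup>2 * w k)" and d: "summable (\<lambda>k. (cmod (d k))\<^sup>2 * w k)"
  shows "summable (\<lambda>k. (cmod (c k - d k))\<^sup>2 * w k)"
    and "(\<Sum>k. (cmod (c k - d k))\<^sup>2 * w k)
           \<le> 2 * (\<Sum>k. (cmod (c k))\<^sup>2 * w k) + 2 * (\<Sum>k. (cmod (d k))\<^sup>2 * w k)"
proof -
  have le: "(cmod (c k - d k))\<^sup>2 * w k \<le> 2 * ((cmod (c k))\<^sup>2 * w k) + 2 * ((cmod (d k))\<^sup>2 * w k)" for k
  proof -
    have "(cmod (c k - d k))\<^sup>2 \<le> (cmod (c k) + cmod (d k))\<^sup>2"
      by (intro power_mono norm_triangle_ineq4) simp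
    also have "\<dots> \<le> 2 * (cmod (c k))\<^sup>2 + 2 * (cmod (d k))\<^sup>2"
      using sum_squares_bound[of "cmod (c k)" "cmod (d k)"] by (simp add: power2_eq_square algebra_simps)
    finally have "(cmod (c k - d k))\<^sup>2 * w k \<le> (2 * (cmod (c k))\<^sup>2 + 2 * (cmod (d k))\<^sup>2) * w k"
      using w[of k] by (rule mult_right_mono)
    then show ?thesis
      by (simp add: algebra_simps)
  qed
  have s2: "summable (\<lambda>k. 2 * ((cmod (c k))\<^sup>2 * w k) + 2 * ((cmod (d k))\<^sup>2 * w k))"
    by (intro summable_add summable_mult c d)
  show s: "summable (\<lambda>k. (cmod (c k - d k))\<^sup>2 * w k)"
    by (rule summable_comparison_test'[OF s2]) (use le w in auto)
  have "(\<Sum>k. (cmod (c k - d k))\<^sup>2 * w k)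
      \<le> (\<Sum>k. 2 * ((cmod (c k))\<^sup>2 * w k) + 2 * ((cmod (d k))\<^sup>2 * w k))"
    by (rule suminf_le[OF le s s2])
  also have "\<dots> = 2 * (\<Sum>k. (cmod (c k))\<^sup>2 * w k) + 2 * (\<Sum>k. (cmod (d k))\<^sup>2 * w k)"
    using c d by (simp add: suminf_add[symmetric] suminf_mult)
  finally show "(\<Sum>k. (cmod (c k - d k))\<^sup>2 * w k)
      \<le> 2 * (\<Sum>k. (cmod (c k))\<^sup>2 * w k) + 2 * (\<Sum>k. (cmod (d k))\<^sup>2 * w k)" .
qed

lemma weighted_coordinate_le_dist:
  fixes u d :: "nat \<Rightarrow> complex" and w :: "nat \<Rightarrow> real"
  assumes w: "\<And>k. w k \<ge> 0" and s: "summable (\<lambda>k. (cmod (u k - d k))\<^sup>2 * w k)"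
  shows "cmod (u n) * sqrt (w n) \<le> cmod (d n) * sqrt (w n) + sqrt (\<Sum>k. (cmod (u k - d k))\<^sup>2 * w k)"
proof -
  have "(cmod (u n - d n) * sqrt (w n))\<^sup>2 \<le> (\<Sum>k. (cmod (u k - d k))\<^sup>2 * w k)"
    using sum_le_suminf[OF s, of "{n}"] w by (simp add: power_mult_distrib)
  then have dist: "cmod (u n - d n) * sqrt (w n) \<le> sqrt (\<Sum>k. (cmod (u k - d k))\<^sup>2 * w k)"
    using real_le_rsqrt by blast
  have "cmod (u n) * sqrt (w n) \<le> (cmod (d n) + cmod (u n - d n)) * sqrt (w n)"
    using norm_triangle_ineq2[of "u n" "d n"] w[of n] by (intro mult_right_mono) auto
  also have "\<dots> \<le> cmod (d n) * sqrt (w n) + sqrt (\<Sum>k. (cmod (u k - d k))\<^sup>2 * w k)"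
    using dist by (simp add: distrib_right)
  finally show ?thesis .
qed

lemma suminf_mult_le_head_tail:
  fixes b v :: "nat \<Rightarrow> real"
  assumes v: "\<And>k. v k \<ge> 0" "summable v" and b: "\<And>k. b k \<ge> 0" "\<And>k. k \<ge> K \<Longrightarrow> b k \<le> \<delta>"
    and bv: "summable (\<lambda>k. b k * v k)"
  shows "(\<Sum>k. b k * v k) \<le> (\<Sum>k<K. b k * v k) + \<delta> * suminf v"
proof -
  define h where "h k = (if k < K then b k * v k else 0)" for k
  have h: "summable h" "suminf h = (\<Sum>k<K. b k * v k)"
    unfolding h_def by (rule summable_finite[of "{..<K}"], simp, simp)
      (subst suminf_finite[of "{..<K}"]; simp)
  have "\<delta> \<ge> 0"
    using b(1)[of K] b(2)[of K] by simp
  then have "b k * v k \<le> h k + \<delta> * v k" for k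
    using b v(1)[of k] by (cases "k < K") (auto simp: h_def mult_right_mono)
  then have "(\<Sum>k. b k * v k) \<le> (\<Sum>k. h k + \<delta> * v k)"
    by (intro suminf_le bv summable_add h(1) summable_mult v(2))
  also have "\<dots> = (\<Sum>k<K. b k * v k) + \<delta> * suminf v"
    using h v(2) by (simp add: suminf_add[symmetric] suminf_mult)
  finally show ?thesis .
qed

lemma tendsto_suminf_mult_null:
  fixes b :: "nat \<Rightarrow> real" and v :: "nat \<Rightarrow> nat \<Rightarrow> real"
  assumes b: "b \<longlonglongrightarrow> 0" "\<And>k. b k \<ge> 0"
    and v: "\<And>i k. v i k \<ge> 0" "\<And>i. summable (v i)" "\<And>i. suminf (v i) \<le> C"
    and v_lim: "\<And>k. (\<lambda>i. v i k) \<longlonglongrightarrow> 0"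
  shows "(\<lambda>i. \<Sum>k. b k * v i k) \<longlonglongrightarrow> 0"
proof -
  have C: "C \<ge> 0" using v(3)[of 0] suminf_nonneg[OF v(2)[of 0] v(1)] by linarith
  obtain M where M: "\<And>k. norm (b k) \<le> M"
    using convergent_imp_Bseq[OF convergentI[OF b(1)]] by (auto simp: Bseq_def)
  have summable: "summable (\<lambda>k. b k * v i k)" for i
    by (rule summable_comparison_test'[where g="\<lambda>k. M * v i k"])
       (use M b(2) v(1) in \<open>auto intro!: summable_mult v(2) mult_right_mono\<close>)
  show ?thesis
  proof (rule order_tendstoI)
    fix e :: real assume "e < 0"
    moreover have "0 \<le> (\<Sum>k. b k * v i k)" for i
      by (intro suminf_nonneg summable mult_nonneg_nonneg b(2) v(1))
    ultimately show "eventually (\<lambda>i. e < (\<Sum>k. b k * v i k)) sequentially"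
      by (intro always_eventually allI) (meson less_le_trans)
  next
    fix e :: real assume e: "0 < e"
    \<comment> \<open>beyond some \<open>K\<close> the weights are below \<open>\<delta>\<close>, and the first \<open>K\<close> terms tend to \<open>0\<close>\<close>
    define \<delta> where "\<delta> = e / (2 * (C + 1))"
    have \<delta>: "\<delta> > 0" "\<delta> * C < e / 2" using e C by (simp_all add: \<delta>_def field_simps)
    obtain K where K: "\<And>k. k \<ge> K \<Longrightarrow> b k < \<delta>"
      using order_tendstoD(2)[OF b(1) \<delta>(1)] by (auto simp: eventually_sequentially)
    have "(\<lambda>i. \<Sum>k<K. b k * v i k) \<longlonglongrightarrow> (\<Sum>k<K. b k * 0)"
      by (intro tendsto_intros v_lim)
    then have "eventually (\<lambda>i. (\<Sum>k<K. b k * v i k) < e / 2) sequentially"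
      using e by (intro order_tendstoD(2)) auto
    then show "eventually (\<lambda>i. (\<Sum>k. b k * v i k) < e) sequentially"
    proof eventually_elim
      fix i assume head: "(\<Sum>k<K. b k * v i k) < e / 2"
      have "(\<Sum>k. b k * v i k) \<le> (\<Sum>k<K. b k * v i k) + \<delta> * suminf (v i)"
        using K by (intro suminf_mult_le_head_tail v(1,2) b(2) summable) (simp add: less_imp_le)
      also have "\<delta> * suminf (v i) \<le> \<delta> * C"
        using v(3)[of i] \<delta>(1) by (intro mult_left_mono) auto
      finally show "(\<Sum>k. b k * v i k) < e" using head \<delta>(2) by linarith
    qed
  qed
qed

lemma diagonal_convergent_subsequence:
  fixes x :: "nat \<Rightarrow> nat \<Rightarrow> 'a::heine_borel"
  assumes bd: "\<And>k. bounded (range (\<lambda>n. x n k))"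
  shows "\<exists>r. strict_mono r \<and> (\<forall>k. convergent (\<lambda>i. x (r i) k))"
proof -
  interpret subseqs "\<lambda>k s. convergent (\<lambda>i. x (s i) k)"
  proof
    fix k and s :: "nat \<Rightarrow> nat"
    have "bounded (range (\<lambda>i. x (s i) k))"
      by (rule bounded_subset[OF bd[of k]]) auto
    from bounded_imp_convergent_subsequence[OF this]
    obtain l r where "strict_mono r" "((\<lambda>i. x (s i) k) \<circ> r) \<longlonglongrightarrow> l" by blast
    then show "\<exists>r'. strict_mono r' \<and> convergent (\<lambda>i. x ((s \<circ> r') i) k)"
      by (auto simp: o_def convergent_def)
  qed
  have "convergent (\<lambda>i. x (diagseq i) k)" for k
  proof -
    have "convergent (\<lambda>i. x ((diagseq \<circ> (+) (Suc k)) i) k)"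
    proof (rule diagseq_holds)
      fix r s n
      assume r: "strict_mono (r :: nat \<Rightarrow> nat)" and "convergent (\<lambda>i. x (s i) n)"
      then obtain L where "(\<lambda>i. x (s i) n) \<longlonglongrightarrow> L"
        by (auto simp: convergent_def)
      from LIMSEQ_subseq_LIMSEQ[OF this r] show "convergent (\<lambda>i. x ((s \<circ> r) i) n)"
        by (auto simp: convergent_def o_def)
    qed
    then obtain L where "(\<lambda>i. x (diagseq (i + Suc k)) k) \<longlonglongrightarrow> L"
      by (auto simp: convergent_def o_def add.commute)
    then have "(\<lambda>i. x (diagseq i) k) \<longlonglongrightarrow> L"
      by (rule LIMSEQ_offset)
    then show ?thesis
      by (rule convergentI)
  qed
  then show ?thesis using subseq_diagseq by blast
qed

lemma weighted_l2_coordinatewise_limit: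
  fixes x :: "nat \<Rightarrow> nat \<Rightarrow> complex" and w :: "nat \<Rightarrow> real"
  assumes w: "\<And>k. w k > 0"
    and x: "\<And>n. summable (\<lambda>k. (cmod (x n k))\<^sup>2 * w k)"
    and B: "\<And>n. (\<Sum>k. (cmod (x n k))\<^sup>2 * w k) \<le> B"
  obtains r d where "strict_mono r" "\<And>k. (\<lambda>i. x (r i) k) \<longlonglongrightarrow> d k"
    "summable (\<lambda>k. (cmod (d k))\<^sup>2 * w k)" "(\<Sum>k. (cmod (d k))\<^sup>2 * w k) \<le> B"
proof -
  have partial_le: "(\<Sum>k\<in>I. (cmod (x n k))\<^sup>2 * w k) \<le> B" if "finite I" for I n
    using order_trans[OF sum_le_suminf[OF x that] B] w by (simp add: less_imp_le)
  have "bounded (range (\<lambda>n. x n k))" for k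
  proof (rule boundedI)
    fix y
    assume "y \<in> range (\<lambda>n. x n k)"
    then obtain n where y: "y = x n k"
      by auto
    have "(cmod (x n k))\<^sup>2 \<le> B / w k"
      using partial_le[of "{k}" n] w[of k] by (simp add: field_simps)
    then show "norm y \<le> sqrt (B / w k)"
      using y real_le_rsqrt by blast
  qed
  then obtain r where r: "strict_mono r" and conv: "\<And>k. convergent (\<lambda>i. x (r i) k)"
    using diagonal_convergent_subsequence by blast
  define d where "d k = lim (\<lambda>i. x (r i) k)" for k
  have d_lim: "(\<lambda>i. x (r i) k) \<longlonglongrightarrow> d k" for k
    unfolding d_def using conv convergent_LIMSEQ_iff by blast
  have d_partial: "(\<Sum>k<K. (cmod (d k))\<^sup>2 * w k) \<le> B" for K
  proof (rule LIMSEQ_le_const2)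
    show "(\<lambda>i. \<Sum>k<K. (cmod (x (r i) k))\<^sup>2 * w k) \<longlonglongrightarrow> (\<Sum>k<K. (cmod (d k))\<^sup>2 * w k)"
      by (intro tendsto_intros d_lim)
    show "\<exists>N. \<forall>i\<ge>N. (\<Sum>k<K. (cmod (x (r i) k))\<^sup>2 * w k) \<le> B"
      using partial_le by blast
  qed
  have d: "summable (\<lambda>k. (cmod (d k))\<^sup>2 * w k)"
    by (rule summableI_nonneg_bounded[OF _ d_partial]) (simp add: w less_imp_le)
  show ?thesis
    by (rule that[OF r d_lim d suminf_le_const[OF d d_partial]])
qed

lemma weighted_l2_diagonal_compact:
  fixes x :: "nat \<Rightarrow> nat \<Rightarrow> complex" and a w :: "nat \<Rightarrow> real"
  assumes a: "a \<longlonglongrightarrow> 0" and w: "\<And>k. w k > 0"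
    and x: "\<And>n. summable (\<lambda>k. (cmod (x n k))\<^sup>2 * w k)"
    and B: "\<And>n. (\<Sum>k. (cmod (x n k))\<^sup>2 * w k) \<le> B"
  shows "\<exists>r d. strict_mono r \<and> summable (\<lambda>k. (cmod (d k))\<^sup>2 * w k) \<and>
    (\<lambda>i. \<Sum>k. (cmod (of_real (a k) * x (r i) k - of_real (a k) * d k))\<^sup>2 * w k) \<longlonglongrightarrow> 0"
proof -
  have w_nonneg: "w k \<ge> 0" for k
    using w[of k] by simp
  obtain r d where r: "strict_mono r" and d_lim: "\<And>k. (\<lambda>i. x (r i) k) \<longlonglongrightarrow> d k"
    and d: "summable (\<lambda>k. (cmod (d k))\<^sup>2 * w k)" and d_le: "(\<Sum>k. (cmod (d k))\<^sup>2 * w k) \<le> B"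
    using weighted_l2_coordinatewise_limit[where x=x and w=w and B=B, OF w x B] by blast
  define v where "v i k = (cmod (x (r i) k - d k))\<^sup>2 * w k" for i k
  have "(\<lambda>i. \<Sum>k. (a k)\<^sup>2 * v i k) \<longlonglongrightarrow> 0"
  proof (rule tendsto_suminf_mult_null)
    show "(\<lambda>k. (a k)\<^sup>2) \<longlonglongrightarrow> 0"
      using tendsto_power[OF a, of 2] by simp
    show "summable (v i)" for i
      unfolding v_def by (rule summable_weighted_diff(1)[OF w_nonneg x d])
    show "suminf (v i) \<le> 4 * B" for i
      using summable_weighted_diff(2)[OF w_nonneg x[of "r i"] d] B[of "r i"] d_le
      unfolding v_def by linarith
    have "(\<lambda>i. (cmod (x (r i) k - d k))\<^sup>2 * w k) \<longlonglongrightarrow> (cmod (d k - d k))\<^sup>2 * w k" for k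
      by (intro tendsto_intros d_lim)
    then show "(\<lambda>i. v i k) \<longlonglongrightarrow> 0" for k
      by (simp add: v_def)
  qed (simp_all add: v_def w_nonneg)
  moreover have "(cmod (of_real (a k) * x (r i) k - of_real (a k) * d k))\<^sup>2 * w k = (a k)\<^sup>2 * v i k" for i k
    by (simp add: v_def norm_mult power_mult_distrib flip: right_diff_distrib)
  ultimately have "(\<lambda>i. \<Sum>k. (cmod (of_real (a k) * x (r i) k - of_real (a k) * d k))\<^sup>2 * w k) \<longlonglongrightarrow> 0"
    by simp
  with r d show ?thesis
    by blast
qed

section \<open>Rotation invariance of Lebesgue measure on the complex plane\<close>

lemma borel_measurable_Complex_pair[measurable]:
  "(\<lambda>p::real \<times> real. Complex (fst p) (snd p)) \<in> borel_measurable (lborel \<Otimes>\<^sub>M lborel)"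
proof -
  have "(\<lambda>p::real \<times> real. Complex (fst p) (snd p)) \<in> borel_measurable borel"
    by (intro borel_measurable_continuous_onI continuous_intros)
  moreover have "sets (lborel \<Otimes>\<^sub>M lborel :: (real \<times> real) measure) = sets borel"
    by (metis lborel_prod sets_lborel)
  ultimately show ?thesis
    by (simp cong: measurable_cong_sets)
qed

lemma distr_lborel_pair_Complex:
  "distr (lborel \<Otimes>\<^sub>M lborel) borel (\<lambda>p::real \<times> real. Complex (fst p) (snd p)) = lborel"
proof (rule lborel_eqI[symmetric])
  fix l u :: complex
  assume lu: "\<And>b. b \<in> Basis \<Longrightarrow> l \<bullet> b \<le> u \<bullet> b"
  have "Re l \<le> Re u" "Im l \<le> Im u"
    using lu[of 1] lu[of \<i>] by (auto simp: inner_complex_def)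
  moreover have "(\<lambda>p::real \<times> real. Complex (fst p) (snd p)) -` box l u \<inter> space (lborel \<Otimes>\<^sub>M lborel)
      = box (Re l) (Re u) \<times> box (Im l) (Im u)"
    by (auto simp: box_def Basis_complex_def inner_complex_def space_pair_measure)
  ultimately show "emeasure (distr (lborel \<Otimes>\<^sub>M lborel) borel (\<lambda>p. Complex (fst p) (snd p))) (box l u)
      = (\<Prod>b\<in>Basis. (u - l) \<bullet> b)"
    by (simp add: emeasure_distr lborel.emeasure_pair_measure_Times Basis_complex_def
        inner_complex_def ennreal_mult)
qed simp

lemma nn_integral_lborel_complex:
  assumes [measurable]: "g \<in> borel_measurable borel"
  shows "(\<integral>\<^sup>+z. g z \<partial>lborel) = (\<integral>\<^sup>+y. \<integral>\<^sup>+x. g (Complex x y) \<partial>lborel \<partial>lborel)"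
proof -
  have "(\<integral>\<^sup>+z. g z \<partial>lborel) = (\<integral>\<^sup>+p. g (Complex (fst p) (snd p)) \<partial>(lborel \<Otimes>\<^sub>M lborel))"
    by (subst distr_lborel_pair_Complex[symmetric]) (simp add: nn_integral_distr)
  also have "\<dots> = (\<integral>\<^sup>+y. \<integral>\<^sup>+x. g (Complex x y) \<partial>lborel \<partial>lborel)"
    by (subst lborel_pair.nn_integral_snd[symmetric]) auto
  finally show ?thesis .
qed

lemma lborel_complex_shear:
  "distr lborel borel (\<lambda>z. Complex (Re z + a * Im z) (Im z)) = lborel"
proof (rule measure_eqI)
  fix A :: "complex set"
  assume "A \<in> sets (distr lborel borel (\<lambda>z. Complex (Re z + a * Im z) (Im z)))"
  then have [measurable]: "A \<in> sets borel" by simp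
  have [measurable]: "(\<lambda>z. Complex (Re z + a * Im z) (Im z)) \<in> borel_measurable borel"
    "\<And>y. (\<lambda>x. Complex x y) \<in> borel_measurable borel"
    by (intro borel_measurable_continuous_onI continuous_intros)+
  have "emeasure (distr lborel borel (\<lambda>z. Complex (Re z + a * Im z) (Im z))) A
      = (\<integral>\<^sup>+z. indicator A (Complex (Re z + a * Im z) (Im z)) \<partial>lborel)"
    by (simp add: nn_integral_distr flip: nn_integral_indicator)
  also have "\<dots> = (\<integral>\<^sup>+y. \<integral>\<^sup>+x. indicator A (Complex (x + a * y) y) \<partial>lborel \<partial>lborel)"
    by (simp add: nn_integral_lborel_complex)
  also have "\<dots> = (\<integral>\<^sup>+y. \<integral>\<^sup>+x. indicator A (Complex x y) \<partial>lborel \<partial>lborel)"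
  proof -
    have "(\<integral>\<^sup>+x. indicator A (Complex (x + a * y) y) \<partial>lborel) = (\<integral>\<^sup>+x. indicator A (Complex x y) \<partial>lborel)"
      for y
      using nn_integral_real_affine[of "\<lambda>x. indicator A (Complex x y)" 1 "a * y"] by (simp add: add.commute)
    then show ?thesis
      by simp
  qed
  also have "\<dots> = emeasure lborel A"
    by (simp add: nn_integral_lborel_complex flip: nn_integral_indicator)
  finally show "emeasure (distr lborel borel (\<lambda>z. Complex (Re z + a * Im z) (Im z))) A = emeasure lborel A" .
qed simp

lemma lborel_complex_swap: "distr lborel borel (\<lambda>z. Complex (Im z) (Re z)) = lborel"
proof (rule lborel_eqI[symmetric])
  fix l u :: complex
  assume lu: "\<And>b. b \<in> Basis \<Longrightarrow> l \<bullet> b \<le> u \<bullet> b"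
  have [measurable]: "(\<lambda>z. Complex (Im z) (Re z)) \<in> borel_measurable borel"
    by (intro borel_measurable_continuous_onI continuous_intros)
  have "Re l \<le> Re u" "Im l \<le> Im u"
    using lu[of 1] lu[of \<i>] by (auto simp: inner_complex_def)
  moreover have "(\<lambda>z. Complex (Im z) (Re z)) -` box l u = box (Complex (Im l) (Re l)) (Complex (Im u) (Re u))"
    by (auto simp: box_def Basis_complex_def inner_complex_def)
  ultimately show "emeasure (distr lborel borel (\<lambda>z. Complex (Im z) (Re z))) (box l u) = (\<Prod>b\<in>Basis. (u - l) \<bullet> b)"
    by (simp add: emeasure_distr emeasure_lborel_box_eq Basis_complex_def inner_complex_def
        box_eq_empty mult.commute)
qed simp

lemma distr_lborel_comp:
  fixes f g :: "'a::euclidean_space \<Rightarrow> 'a"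
  assumes "f \<in> borel_measurable borel" "g \<in> borel_measurable borel"
    and "distr lborel borel f = lborel" "distr lborel borel g = lborel"
  shows "distr lborel borel (f \<circ> g) = lborel"
  using assms by (simp add: distr_distr[symmetric])

text \<open>A rotation with non-real \<open>\<eta>\<close> is a product of three shears.\<close>
lemma lborel_complex_rotation_nonreal:
  assumes "cmod \<eta> = 1" "Im \<eta> \<noteq> 0"
  shows "distr lborel borel (\<lambda>z. \<eta> * z) = lborel"
proof -
  define t where "t = (Re \<eta> - 1) / Im \<eta>"
  define S where "S z = Complex (Re z + t * Im z) (Im z)" for z
  define J where "J z = Complex (Im z) (Re z)" for z
  define T where "T z = Complex (Re z + Im \<eta> * Im z) (Im z)" for z
  have m: "S \<in> borel_measurable borel" "J \<in> borel_measurable borel" "T \<in> borel_measurable borel"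
    unfolding S_def J_def T_def by (intro borel_measurable_continuous_onI continuous_intros)+
  have S: "distr lborel borel S = lborel" and T: "distr lborel borel T = lborel"
    and J: "distr lborel borel J = lborel"
    unfolding S_def T_def J_def by (rule lborel_complex_shear lborel_complex_swap)+
  have JT: "distr lborel borel (J \<circ> T) = lborel" and JS: "distr lborel borel (J \<circ> S) = lborel"
    by (rule distr_lborel_comp[OF m(2) m(3) J T], rule distr_lborel_comp[OF m(2) m(1) J S])
  have JTJS: "distr lborel borel ((J \<circ> T) \<circ> (J \<circ> S)) = lborel"
    by (rule distr_lborel_comp[OF measurable_comp[OF m(3) m(2)] measurable_comp[OF m(1) m(2)] JT JS])
  have "(Re \<eta>)\<^sup>2 + (Im \<eta>)\<^sup>2 = 1"
    using assms(1) by (simp add: cmod_def)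
  then have "S (J (T (J (S z)))) = \<eta> * z" for z
    using assms(2) by (simp add: S_def J_def T_def t_def complex_eq_iff field_simps power2_eq_square)
      algebra
  then have "(\<lambda>z. \<eta> * z) = S \<circ> ((J \<circ> T) \<circ> (J \<circ> S))"
    by auto
  then show ?thesis
    by (simp only:) (rule distr_lborel_comp[OF m(1) measurable_comp[OF measurable_comp[OF m(1) m(2)]
          measurable_comp[OF m(3) m(2)]] S JTJS])
qed

lemma lborel_complex_rotation:
  assumes "cmod \<zeta> = 1"
  shows "distr lborel borel (\<lambda>z. \<zeta> * z) = lborel"
proof (cases "Im \<zeta> = 0")
  case True
  then have "\<zeta> = 1 \<or> \<zeta> = -1"
    using assms by (auto simp: cmod_def complex_eq_iff abs_if split: if_splits)
  then consider "(\<lambda>z. \<zeta> * z) = (\<lambda>z. z)" | "(\<lambda>z. \<zeta> * z) = (\<lambda>z. \<i> * z) \<circ> (\<lambda>z. \<i> * z)"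
    by (auto simp: fun_eq_iff)
  then show ?thesis
  proof cases
    case 2
    have "(\<lambda>z. \<i> * z) \<in> borel_measurable borel"
      by (intro borel_measurable_continuous_onI continuous_intros)
    with 2 show ?thesis
      by (simp only:) (rule distr_lborel_comp; simp add: lborel_complex_rotation_nonreal)
  qed (simp add: distr_id2)
qed (use assms lborel_complex_rotation_nonreal in blast)

section \<open>Gaussian moments and the Parseval identity\<close>

definition gauss_weight :: "real \<Rightarrow> complex \<Rightarrow> real" where
  "gauss_weight \<alpha> z = exp (- \<alpha> * (cmod z)\<^sup>2)"

lemma gauss_weight_pos: "gauss_weight \<alpha> z > 0"
  by (simp add: gauss_weight_def)

lemma gauss_weight_le_1: "\<alpha> \<ge> 0 \<Longrightarrow> gauss_weight \<alpha> z \<le> 1"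
  by (simp add: gauss_weight_def)

lemma continuous_on_gauss_weight[continuous_intros]: "continuous_on S (gauss_weight \<alpha>)"
  unfolding gauss_weight_def by (intro continuous_intros)

lemma borel_measurable_gauss_weight[measurable]: "gauss_weight \<alpha> \<in> borel_measurable borel"
  by (intro borel_measurable_continuous_onI continuous_intros)

lemma gauss_weight_rotate: "cmod \<zeta> = 1 \<Longrightarrow> gauss_weight \<alpha> (\<zeta> * z) = gauss_weight \<alpha> z"
  by (simp add: gauss_weight_def norm_mult)

lemma nn_integral_gaussian_finite:
  fixes \<beta> :: real
  assumes "\<beta> > 0"
  shows "(\<integral>\<^sup>+x. ennreal (exp (- \<beta> * x\<^sup>2)) \<partial>lborel) < \<infinity>"
proof -
  have "has_bochner_integral lborel (\<lambda>x::real. exp (- x\<^sup>2) * x ^ (2 * 0))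
      (sqrt pi * (fact (2 * 0) / (2 ^ (2 * 0) * fact 0)))"
    using has_bochner_integral_even_function[OF gaussian_moment_even_pos[where k=0]] by simp
  then have finite: "(\<integral>\<^sup>+x. ennreal (exp (- x\<^sup>2)) \<partial>lborel) < \<infinity>"
    by (simp add: has_bochner_integral_iff integrable_iff_bounded)
  define c where "c = 1 / sqrt \<beta>"
  have "c \<noteq> 0"
    using assms by (simp add: c_def)
  have "(\<integral>\<^sup>+x. ennreal (exp (- \<beta> * x\<^sup>2)) \<partial>lborel)
      = \<bar>c\<bar> * (\<integral>\<^sup>+x. ennreal (exp (- \<beta> * (0 + c * x)\<^sup>2)) \<partial>lborel)"
    by (rule nn_integral_real_affine[OF _ \<open>c \<noteq> 0\<close>]) simp
  moreover have "\<beta> * (c * x)\<^sup>2 = x\<^sup>2" for x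
    using assms by (simp add: c_def power_mult_distrib power_divide)
  ultimately show ?thesis
    using finite by (simp add: ennreal_mult_less_top)
qed

lemma nn_integral_gauss_weight_finite:
  assumes "\<alpha> > 0"
  shows "(\<integral>\<^sup>+z. ennreal (gauss_weight \<alpha> z) \<partial>lborel) < \<infinity>"
proof -
  have "(\<integral>\<^sup>+z. ennreal (gauss_weight \<alpha> z) \<partial>lborel)
      = (\<integral>\<^sup>+y. \<integral>\<^sup>+x. ennreal (gauss_weight \<alpha> (Complex x y)) \<partial>lborel \<partial>lborel)"
    by (rule nn_integral_lborel_complex[OF measurable_compose[OF borel_measurable_gauss_weight measurable_ennreal]])
  also have "\<dots> = (\<integral>\<^sup>+y. \<integral>\<^sup>+x. ennreal (exp (- \<alpha> * y\<^sup>2)) * ennreal (exp (- \<alpha> * x\<^sup>2)) \<partial>lborel \<partial>lborel)"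
    by (intro nn_integral_cong)
      (simp add: gauss_weight_def cmod_def exp_add[symmetric] ennreal_mult[symmetric] algebra_simps)
  also have "\<dots> = (\<integral>\<^sup>+y. ennreal (exp (- \<alpha> * y\<^sup>2)) * (\<integral>\<^sup>+x. ennreal (exp (- \<alpha> * x\<^sup>2)) \<partial>lborel) \<partial>lborel)"
    by (intro nn_integral_cong nn_integral_cmult) simp
  also have "\<dots> = (\<integral>\<^sup>+y. ennreal (exp (- \<alpha> * y\<^sup>2)) \<partial>lborel) * (\<integral>\<^sup>+x. ennreal (exp (- \<alpha> * x\<^sup>2)) \<partial>lborel)"
    by (rule nn_integral_multc) simp
  finally show ?thesis
    using nn_integral_gaussian_finite[OF assms] by (simp add: ennreal_mult_less_top)
qed

lemma pow_le_fact_mult_exp: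
  fixes u :: real
  assumes "u \<ge> 0"
  shows "u ^ k \<le> fact k * exp u"
proof -
  have summable: "summable (\<lambda>n. u ^ n / fact n)"
    using exp_converges[of u] by (simp add: sums_summable divide_inverse mult.commute scaleR_conv_of_real)
  have "u ^ k / fact k \<le> (\<Sum>n<Suc k. u ^ n / fact n)"
    using assms by (intro member_le_sum) auto
  also have "\<dots> \<le> (\<Sum>n. u ^ n / fact n)"
    using summable assms by (intro sum_le_suminf) auto
  also have "\<dots> = exp u"
    using exp_converges[of u] by (simp add: sums_iff divide_inverse mult.commute scaleR_conv_of_real)
  finally show ?thesis
    by (simp add: field_simps)
qed

definition gauss_moment :: "real \<Rightarrow> nat \<Rightarrow> real" where
  "gauss_moment \<alpha> k = (\<integral>z. (cmod z) ^ (2 * k) * gauss_weight \<alpha> z \<partial>lborel)"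

lemma gauss_moment_nonneg[simp]: "gauss_moment \<alpha> k \<ge> 0"
  unfolding gauss_moment_def by (intro integral_nonneg_AE AE_I2) (simp add: gauss_weight_pos less_imp_le)

lemma nn_integral_gauss_moment_finite:
  assumes "\<alpha> > 0"
  shows "(\<integral>\<^sup>+z. ennreal ((cmod z) ^ (2 * k) * gauss_weight \<alpha> z) \<partial>lborel) < \<infinity>"
proof -
  define C where "C = fact k * (2 / \<alpha>) ^ k"
  \<comment> \<open>half of the Gaussian decay absorbs the polynomial factor\<close>
  have pointwise: "(cmod z) ^ (2 * k) * gauss_weight \<alpha> z \<le> C * gauss_weight (\<alpha> / 2) z" for z
  proof -
    define u where "u = \<alpha> / 2 * (cmod z)\<^sup>2"
    have "(cmod z) ^ (2 * k) = (2 / \<alpha>) ^ k * u ^ k"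
      using assms by (simp add: u_def power_mult power_mult_distrib[symmetric])
    also have "\<dots> \<le> (2 / \<alpha>) ^ k * (fact k * exp u)"
      using assms by (intro mult_left_mono pow_le_fact_mult_exp) (auto simp: u_def)
    moreover have "gauss_weight \<alpha> z = exp (- 2 * u)"
      by (simp add: gauss_weight_def u_def)
    ultimately have "(cmod z) ^ (2 * k) * gauss_weight \<alpha> z \<le> (2 / \<alpha>) ^ k * (fact k * exp u) * exp (- 2 * u)"
      by (simp add: mult_right_mono)
    also have "\<dots> = C * gauss_weight (\<alpha> / 2) z"
      by (simp add: C_def gauss_weight_def u_def mult_exp_exp)
    finally show ?thesis .
  qed
  have "ennreal ((cmod z) ^ (2 * k) * gauss_weight \<alpha> z) \<le> ennreal C * ennreal (gauss_weight (\<alpha> / 2) z)" for z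
    using pointwise[of z] assms gauss_weight_pos[of "\<alpha> / 2" z]
    by (subst ennreal_mult[symmetric]) (auto simp: C_def intro!: ennreal_leI)
  then have "(\<integral>\<^sup>+z. ennreal ((cmod z) ^ (2 * k) * gauss_weight \<alpha> z) \<partial>lborel)
      \<le> (\<integral>\<^sup>+z. ennreal C * ennreal (gauss_weight (\<alpha> / 2) z) \<partial>lborel)"
    by (rule nn_integral_mono)
  also have "\<dots> < \<infinity>"
    using nn_integral_gauss_weight_finite[of "\<alpha> / 2"] assms
    by (simp add: nn_integral_cmult ennreal_mult_less_top)
  finally show ?thesis .
qed

lemma integrable_gauss_moment:
  "\<alpha> > 0 \<Longrightarrow> integrable lborel (\<lambda>z. (cmod z) ^ (2 * k) * gauss_weight \<alpha> z)"
  using nn_integral_gauss_moment_finite[of \<alpha> k]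
  by (intro integrableI_bounded)
     (auto simp: abs_mult gauss_weight_pos less_imp_le intro!: mult_nonneg_nonneg)

lemma nn_integral_gauss_moment:
  "\<alpha> > 0 \<Longrightarrow> (\<integral>\<^sup>+z. ennreal ((cmod z) ^ (2 * k) * gauss_weight \<alpha> z) \<partial>lborel) = ennreal (gauss_moment \<alpha> k)"
  unfolding gauss_moment_def
  by (intro nn_integral_eq_integral integrable_gauss_moment AE_I2)
     (simp_all add: gauss_weight_pos less_imp_le)

lemma integrable_gauss_weight_indicator:
  assumes "\<alpha> > 0" "A \<in> sets borel"
  shows "integrable lborel (\<lambda>z. gauss_weight \<alpha> z * indicator A z)"
  using assms
  by (intro Bochner_Integration.integrable_bound[OF integrable_gauss_moment[OF assms(1), of 0]])
     (auto simp: indicator_def gauss_weight_pos less_imp_le)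

text \<open>The complement of a disc has infinite, in particular non-zero, Lebesgue measure.\<close>
lemma integral_gauss_weight_outside_disc_pos:
  assumes "\<alpha> > 0"
  shows "(\<integral>z. gauss_weight \<alpha> z * indicator {z. \<rho> \<le> cmod z} z \<partial>lborel) > 0"
proof -
  define F where "F = {z::complex. \<rho> \<le> cmod z}"
  have F[measurable]: "F \<in> sets borel"
    unfolding F_def by (intro borel_closed closed_Collect_le continuous_intros)
  have "(\<integral>z. gauss_weight \<alpha> z * indicator F z \<partial>lborel) \<noteq> 0"
  proof
    assume "(\<integral>z. gauss_weight \<alpha> z * indicator F z \<partial>lborel) = 0"
    then have "AE z in lborel. gauss_weight \<alpha> z * indicator F z = 0"
      using integrable_gauss_weight_indicator[OF assms F]
      by (simp add: integral_nonneg_eq_0_iff_AE gauss_weight_pos less_imp_le)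
    then have "AE z in lborel. z \<notin> F"
      by eventually_elim (simp add: gauss_weight_def indicator_def split: if_splits)
    then have "emeasure lborel F = 0"
      by (subst (asm) AE_iff_measurable[of F]) auto
    moreover have "UNIV = ball (0::complex) \<rho> \<union> F"
      by (auto simp: F_def)
    ultimately have "emeasure lborel (UNIV :: complex set) \<le> emeasure lborel (ball (0::complex) \<rho>) + 0"
      using emeasure_subadditive[of "ball (0::complex) \<rho>" lborel F] by simp
    then show False
      using emeasure_lborel_ball_finite[of "0::complex" \<rho>] by simp
  qed
  moreover have "(\<integral>z. gauss_weight \<alpha> z * indicator F z \<partial>lborel) \<ge> 0"
    by (intro integral_nonneg_AE AE_I2) (simp add: gauss_weight_pos less_imp_le)
  ultimately show ?thesis
    by (simp add: F_def)
qed

lemma gauss_moment_lower_bound: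
  assumes "\<alpha> > 0" "\<rho> > 0"
  shows "\<exists>m>0. \<forall>k. \<rho> ^ (2 * k) * m \<le> gauss_moment \<alpha> k"
proof (intro exI conjI allI)
  define F where "F = {z::complex. \<rho> \<le> cmod z}"
  define m where "m = (\<integral>z. gauss_weight \<alpha> z * indicator F z \<partial>lborel)"
  have F: "F \<in> sets borel"
    unfolding F_def by (intro borel_closed closed_Collect_le continuous_intros)
  show "m > 0"
    unfolding m_def F_def by (rule integral_gauss_weight_outside_disc_pos[OF assms(1)])
  fix k
  have "\<rho> ^ (2 * k) * m = (\<integral>z. \<rho> ^ (2 * k) * (gauss_weight \<alpha> z * indicator F z) \<partial>lborel)"
    by (simp add: m_def)
  also have "\<dots> \<le> gauss_moment \<alpha> k"
    unfolding gauss_moment_def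
  proof (rule integral_mono)
    show "integrable lborel (\<lambda>z. \<rho> ^ (2 * k) * (gauss_weight \<alpha> z * indicator F z))"
      using integrable_gauss_weight_indicator[OF assms(1) F] by (rule integrable_mult_right)
    show "integrable lborel (\<lambda>z. (cmod z) ^ (2 * k) * gauss_weight \<alpha> z)"
      using assms(1) by (rule integrable_gauss_moment)
    fix z :: complex
    show "\<rho> ^ (2 * k) * (gauss_weight \<alpha> z * indicator F z) \<le> (cmod z) ^ (2 * k) * gauss_weight \<alpha> z"
      using assms(2) gauss_weight_pos[of \<alpha> z]
      by (cases "z \<in> F") (auto simp: F_def intro: mult_right_mono power_mono)
  qed
  finally show "\<rho> ^ (2 * k) * m \<le> gauss_moment \<alpha> k" .
qed

lemma gauss_moment_pos:
  assumes "\<alpha> > 0"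
  shows "gauss_moment \<alpha> k > 0"
proof -
  obtain m where "m > 0" "\<forall>k. 1 ^ (2 * k) * m \<le> gauss_moment \<alpha> k"
    using gauss_moment_lower_bound[OF assms, of 1] by auto
  then show ?thesis
    by (metis less_le_trans mult_1 power_one)
qed

definition entire_coeffs :: "(nat \<Rightarrow> complex) \<Rightarrow> bool" where
  "entire_coeffs c \<longleftrightarrow> (\<forall>R\<ge>0. summable (\<lambda>k. cmod (c k) * R ^ k))"

lemma entire_coeffs_summable_norm: "entire_coeffs c \<Longrightarrow> summable (\<lambda>k. norm (c k * z ^ k))"
  unfolding entire_coeffs_def by (auto simp: norm_mult norm_power)

lemma entire_coeffs_sums: "entire_coeffs c \<Longrightarrow> (\<lambda>k. c k * z ^ k) sums (\<Sum>k. c k * z ^ k)"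
  by (rule summable_sums[OF summable_norm_cancel[OF entire_coeffs_summable_norm]])

lemma holomorphic_on_power_series:
  assumes "entire_coeffs c"
  shows "(\<lambda>z. \<Sum>k. c k * z ^ k) holomorphic_on UNIV"
proof -
  have h: "(\<lambda>z. \<Sum>k. c k * z ^ k) holomorphic_on ball 0 r" for r
    by (rule power_series_holomorphic) (use entire_coeffs_sums[OF assms] in simp)
  show ?thesis
    unfolding holomorphic_on_open[OF open_UNIV]
  proof
    fix z :: complex
    have "z \<in> ball 0 (cmod z + 1)"
      by simp
    with h[of "cmod z + 1"] show "\<exists>f'. ((\<lambda>z. \<Sum>k. c k * z ^ k) has_field_derivative f') (at z)"
      unfolding holomorphic_on_open[OF open_ball] by blast
  qed
qed

lemma borel_measurable_power_series[measurable]: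
  "entire_coeffs c \<Longrightarrow> (\<lambda>z. \<Sum>k. c k * z ^ k) \<in> borel_measurable borel"
  by (intro borel_measurable_continuous_onI holomorphic_on_imp_continuous_on holomorphic_on_power_series)

lemma norm_partial_power_series_le:
  assumes "entire_coeffs c" "cmod z \<le> R"
  shows "cmod (\<Sum>k<N. c k * z ^ k) \<le> (\<Sum>k. cmod (c k) * R ^ k)"
proof -
  have "R \<ge> 0"
    using assms(2) norm_ge_zero order_trans by blast
  then have "summable (\<lambda>k. cmod (c k) * R ^ k)"
    using assms(1) by (simp add: entire_coeffs_def)
  then have "(\<Sum>k<N. cmod (c k) * R ^ k) \<le> (\<Sum>k. cmod (c k) * R ^ k)"
    by (rule sum_le_suminf) (simp_all add: \<open>R \<ge> 0\<close>)
  moreover have "cmod (\<Sum>k<N. c k * z ^ k) \<le> (\<Sum>k<N. cmod (c k) * R ^ k)"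
    using assms(2) by (intro order_trans[OF norm_sum sum_mono])
      (auto simp: norm_mult norm_power intro!: mult_left_mono power_mono)
  ultimately show ?thesis
    by linarith
qed

lemma sets_borel_cball[measurable]: "cball x r \<in> sets borel"
  by (simp add: borel_closed)

definition disc_monomial :: "nat \<Rightarrow> nat \<Rightarrow> real \<Rightarrow> real \<Rightarrow> complex \<Rightarrow> complex" where
  "disc_monomial n m \<alpha> R z = z ^ n * cnj z ^ m * of_real (gauss_weight \<alpha> z * indicator (cball 0 R) z)"

lemma borel_measurable_disc_monomial[measurable]: "disc_monomial n m \<alpha> R \<in> borel_measurable borel"
proof -
  have "(\<lambda>z. z ^ n * cnj z ^ m * of_real (gauss_weight \<alpha> z)) \<in> borel_measurable borel"
    by (intro borel_measurable_continuous_onI continuous_intros)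
  then show ?thesis
    unfolding disc_monomial_def of_real_mult mult.assoc[symmetric] by measurable
qed

lemma integrable_disc_monomial:
  assumes "\<alpha> \<ge> 0"
  shows "integrable lborel (disc_monomial n m \<alpha> R)"
proof (rule integrableI_bounded_set[where A="cball 0 R" and B="R ^ (n + m)"])
  show "AE z in lborel. z \<in> cball 0 R \<longrightarrow> norm (disc_monomial n m \<alpha> R z) \<le> R ^ (n + m)"
  proof (intro AE_I2 impI)
    fix z :: complex
    assume "z \<in> cball 0 R"
    then have "cmod z \<le> R"
      by simp
    then have "R \<ge> 0"
      using norm_ge_zero order_trans by blast
    have "norm (disc_monomial n m \<alpha> R z) = cmod z ^ n * cmod z ^ m * gauss_weight \<alpha> z"
      using \<open>z \<in> cball 0 R\<close> by (simp add: disc_monomial_def norm_mult norm_power abs_of_pos gauss_weight_pos)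
    also have "\<dots> \<le> R ^ n * R ^ m * 1"
      using \<open>cmod z \<le> R\<close> \<open>R \<ge> 0\<close> gauss_weight_le_1[OF assms, of z]
      by (intro mult_mono power_mono) (auto simp: gauss_weight_pos less_imp_le)
    finally show "norm (disc_monomial n m \<alpha> R z) \<le> R ^ (n + m)"
      by (simp add: power_add)
  qed
qed (auto simp: disc_monomial_def emeasure_lborel_cball_finite[simplified])

lemma disc_monomial_rotate:
  "cmod \<zeta> = 1 \<Longrightarrow> disc_monomial n m \<alpha> R (\<zeta> * z) = \<zeta> ^ n * cnj \<zeta> ^ m * disc_monomial n m \<alpha> R z"
  by (simp add: disc_monomial_def gauss_weight_rotate indicator_def norm_mult power_mult_distrib
      algebra_simps)

text \<open>Rotating by \<open>\<zeta> = cis (pi / \<bar>n - m\<bar>)\<close> multiplies the integral by \<open>\<zeta>\<^sup>n cnj \<zeta>\<^sup>m = -1\<close>.\<close>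
lemma integral_disc_monomial_eq_0:
  assumes "n \<noteq> m"
  shows "(\<integral>z. disc_monomial n m \<alpha> R z \<partial>lborel) = 0"
proof -
  define d where "d = real n - real m"
  define \<zeta> where "\<zeta> = cis (pi / \<bar>d\<bar>)"
  have "\<zeta> ^ n * cnj \<zeta> ^ m = cis (real n * (pi / \<bar>d\<bar>)) * cis (real m * - (pi / \<bar>d\<bar>))"
    unfolding \<zeta>_def cis_cnj by (simp only: Complex.DeMoivre)
  also have "\<dots> = cis (d * (pi / \<bar>d\<bar>))"
    by (simp add: cis_mult d_def algebra_simps diff_divide_distrib)
  also have "\<dots> = -1"
  proof -
    have "d \<noteq> 0"
      using assms by (simp add: d_def)
    then have "d * (pi / \<bar>d\<bar>) = pi \<or> d * (pi / \<bar>d\<bar>) = - pi"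
      by (cases "d > 0") (simp_all add: field_simps)
    then show ?thesis
      by (auto simp: cis.ctr complex_eq_iff)
  qed
  finally have rotate: "\<zeta> ^ n * cnj \<zeta> ^ m = -1" .
  have "(\<integral>z. disc_monomial n m \<alpha> R z \<partial>lborel)
      = (\<integral>z. disc_monomial n m \<alpha> R z \<partial>distr lborel borel (\<lambda>z. \<zeta> * z))"
    by (simp add: \<zeta>_def lborel_complex_rotation)
  also have "\<dots> = (\<integral>z. disc_monomial n m \<alpha> R (\<zeta> * z) \<partial>lborel)"
    by (intro integral_distr) simp_all
  also have "\<dots> = - (\<integral>z. disc_monomial n m \<alpha> R z \<partial>lborel)"
    by (simp add: \<zeta>_def disc_monomial_rotate rotate[unfolded \<zeta>_def])
  finally show ?thesis
    by simp
qed

definition disc_moment :: "real \<Rightarrow> real \<Rightarrow> nat \<Rightarrow> real" where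
  "disc_moment \<alpha> R k = (\<integral>z. (cmod z) ^ (2 * k) * gauss_weight \<alpha> z * indicator (cball 0 R) z \<partial>lborel)"

lemma disc_monomial_diag:
  "disc_monomial k k \<alpha> R z = of_real ((cmod z) ^ (2 * k) * gauss_weight \<alpha> z * indicator (cball 0 R) z)"
proof -
  have "z ^ k * cnj z ^ k = (z * cnj z) ^ k"
    by (simp add: power_mult_distrib)
  also have "\<dots> = (of_real ((cmod z)\<^sup>2)) ^ k"
    by (simp only: complex_norm_square)
  also have "\<dots> = of_real ((cmod z) ^ (2 * k))"
    by (simp add: power_mult)
  finally have "z ^ k * cnj z ^ k = of_real ((cmod z) ^ (2 * k))" .
  then show ?thesis
    by (simp add: disc_monomial_def mult.assoc)
qed

lemma disc_moment_eq_integral_disc_monomial: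
  "of_real (disc_moment \<alpha> R k) = (\<integral>z. disc_monomial k k \<alpha> R z \<partial>lborel)"
  by (simp only: disc_moment_def disc_monomial_diag integral_complex_of_real)

lemma disc_moment_nonneg[simp]: "disc_moment \<alpha> R k \<ge> 0"
  unfolding disc_moment_def by (intro integral_nonneg_AE AE_I2) (simp add: gauss_weight_pos less_imp_le)

lemma ennreal_disc_moment:
  assumes "\<alpha> \<ge> 0"
  shows "ennreal (disc_moment \<alpha> R k)
    = (\<integral>\<^sup>+z. ennreal ((cmod z) ^ (2 * k) * gauss_weight \<alpha> z * indicator (cball 0 R) z) \<partial>lborel)"
proof -
  have "integrable lborel (\<lambda>z. (cmod z) ^ (2 * k) * gauss_weight \<alpha> z * indicator (cball 0 R) z)"
    using integrable_Re[OF integrable_disc_monomial[OF assms, of k k R]] by (simp add: disc_monomial_diag)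
  then show ?thesis
    unfolding disc_moment_def
    by (intro nn_integral_eq_integral[symmetric] AE_I2)
      (auto simp: gauss_weight_pos less_imp_le intro!: mult_nonneg_nonneg)
qed

lemma integral_norm_poly_squared_disc:
  fixes c :: "nat \<Rightarrow> complex"
  assumes "\<alpha> \<ge> 0"
  shows "(\<integral>z. (cmod (\<Sum>k<N. c k * z ^ k))\<^sup>2 * gauss_weight \<alpha> z * indicator (cball 0 R) z \<partial>lborel)
       = (\<Sum>k<N. (cmod (c k))\<^sup>2 * disc_moment \<alpha> R k)"
proof -
  have expand: "of_real ((cmod (\<Sum>k<N. c k * z ^ k))\<^sup>2 * gauss_weight \<alpha> z * indicator (cball 0 R) z)
      = (\<Sum>k<N. \<Sum>l<N. (c k * cnj (c l)) * disc_monomial k l \<alpha> R z)" for z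
  proof -
    have "of_real ((cmod (\<Sum>k<N. c k * z ^ k))\<^sup>2) = (\<Sum>k<N. c k * z ^ k) * cnj (\<Sum>l<N. c l * z ^ l)"
      by (rule complex_norm_square)
    also have "\<dots> = (\<Sum>k<N. \<Sum>l<N. (c k * z ^ k) * (cnj (c l) * cnj z ^ l))"
      by (simp add: sum_product)
    finally show ?thesis
      by (simp add: disc_monomial_def sum_distrib_left mult_ac)
  qed
  have "(of_real (\<integral>z. (cmod (\<Sum>k<N. c k * z ^ k))\<^sup>2 * gauss_weight \<alpha> z * indicator (cball 0 R) z \<partial>lborel) :: complex)
      = (\<integral>z. of_real ((cmod (\<Sum>k<N. c k * z ^ k))\<^sup>2 * gauss_weight \<alpha> z * indicator (cball 0 R) z) \<partial>lborel)"
    by (rule integral_complex_of_real[symmetric])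
  also have "\<dots> = (\<integral>z. (\<Sum>k<N. \<Sum>l<N. (c k * cnj (c l)) * disc_monomial k l \<alpha> R z) \<partial>lborel)"
    by (simp only: expand)
  also have "\<dots> = (\<Sum>k<N. \<Sum>l<N. (c k * cnj (c l)) * (\<integral>z. disc_monomial k l \<alpha> R z \<partial>lborel))"
    using integrable_disc_monomial[OF assms]
    by (simp add: integral_sum integrable_sum)
  also have "\<dots> = (\<Sum>k<N. (c k * cnj (c k)) * (\<integral>z. disc_monomial k k \<alpha> R z \<partial>lborel))"
  proof (rule sum.cong[OF refl])
    fix k
    assume "k \<in> {..<N}"
    then have "(\<Sum>l<N. (c k * cnj (c l)) * (\<integral>z. disc_monomial k l \<alpha> R z \<partial>lborel))
        = (\<Sum>l\<in>{k}. (c k * cnj (c l)) * (\<integral>z. disc_monomial k l \<alpha> R z \<partial>lborel))"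
      by (intro sum.mono_neutral_right) (auto simp: integral_disc_monomial_eq_0)
    then show "(\<Sum>l<N. (c k * cnj (c l)) * (\<integral>z. disc_monomial k l \<alpha> R z \<partial>lborel))
        = (c k * cnj (c k)) * (\<integral>z. disc_monomial k k \<alpha> R z \<partial>lborel)"
      by simp
  qed
  also have "\<dots> = of_real (\<Sum>k<N. (cmod (c k))\<^sup>2 * disc_moment \<alpha> R k)"
    by (simp add: disc_moment_eq_integral_disc_monomial[symmetric] flip: complex_norm_square)
  finally show ?thesis
    by (simp only: of_real_eq_iff)
qed

lemma parseval_disc:
  fixes c :: "nat \<Rightarrow> complex" and R :: real
  assumes \<alpha>: "\<alpha> \<ge> 0" and c: "entire_coeffs c"
  defines "F \<equiv> \<lambda>z. (cmod (\<Sum>k. c k * z ^ k))\<^sup>2 * gauss_weight \<alpha> z * indicator (cball 0 R) z"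
  shows "integrable lborel F" and "(\<lambda>k. (cmod (c k))\<^sup>2 * disc_moment \<alpha> R k) sums integral\<^sup>L lborel F"
proof -
  define B where "B = (\<Sum>k. cmod (c k) * R ^ k)"
  define s where "s N z = (cmod (\<Sum>k<N. c k * z ^ k))\<^sup>2 * gauss_weight \<alpha> z * indicator (cball 0 R) z" for N z
  have [measurable]: "s N \<in> borel_measurable lborel" for N
  proof -
    have "(\<lambda>z. (cmod (\<Sum>k<N. c k * z ^ k))\<^sup>2 * gauss_weight \<alpha> z) \<in> borel_measurable borel"
      by (intro borel_measurable_continuous_onI continuous_intros)
    then show ?thesis
      unfolding s_def by measurable
  qed
  have lim: "AE z in lborel. (\<lambda>N. s N z) \<longlonglongrightarrow> F z"
    using summable_LIMSEQ[OF summable_norm_cancel[OF entire_coeffs_summable_norm[OF c]]]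
    by (intro AE_I2) (auto simp: s_def F_def intro!: tendsto_intros)
  have bound: "AE z in lborel. norm (s N z) \<le> B\<^sup>2 * indicator (cball 0 R) z" for N
  proof (intro AE_I2)
    fix z :: complex
    show "norm (s N z) \<le> B\<^sup>2 * indicator (cball 0 R) z"
    proof (cases "z \<in> cball 0 R")
      case True
      then have "cmod (\<Sum>k<N. c k * z ^ k) \<le> B"
        unfolding B_def using c by (intro norm_partial_power_series_le) auto
      then have "(cmod (\<Sum>k<N. c k * z ^ k))\<^sup>2 * gauss_weight \<alpha> z \<le> B\<^sup>2 * 1"
        using gauss_weight_le_1[OF \<alpha>, of z] gauss_weight_pos[of \<alpha> z]
        by (intro mult_mono power_mono) auto
      then show ?thesis
        using True gauss_weight_pos[of \<alpha> z] by (simp add: s_def)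
    qed (simp add: s_def)
  qed
  have dominating: "integrable lborel (\<lambda>z. B\<^sup>2 * indicator (cball (0::complex) R) z)"
    using emeasure_lborel_cball_finite[of "0::complex" R] by (simp add: integrable_indicator_iff)
  have [measurable]: "F \<in> borel_measurable lborel"
    unfolding F_def using c by measurable
  show "integrable lborel F"
    by (rule integrable_dominated_convergence[OF _ _ dominating lim bound]) simp_all
  have "(\<lambda>N. integral\<^sup>L lborel (s N)) \<longlonglongrightarrow> integral\<^sup>L lborel F"
    by (rule integral_dominated_convergence[OF _ _ dominating lim bound]) simp_all
  moreover have "integral\<^sup>L lborel (s N) = (\<Sum>k<N. (cmod (c k))\<^sup>2 * disc_moment \<alpha> R k)" for N
    unfolding s_def[abs_def] by (rule integral_norm_poly_squared_disc[OF \<alpha>])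
  ultimately show "(\<lambda>k. (cmod (c k))\<^sup>2 * disc_moment \<alpha> R k) sums integral\<^sup>L lborel F"
    unfolding sums_def by simp
qed

lemma nn_integral_eq_SUP_cball:
  fixes F :: "'a::euclidean_space \<Rightarrow> real"
  assumes [measurable]: "F \<in> borel_measurable borel" and "\<And>z. F z \<ge> 0"
  shows "(\<integral>\<^sup>+z. ennreal (F z) \<partial>lborel) = (SUP n. \<integral>\<^sup>+z. ennreal (F z * indicator (cball 0 (real n)) z) \<partial>lborel)"
proof -
  let ?G = "\<lambda>n z. ennreal (F z * indicator (cball 0 (real n)) z)"
  have "incseq ?G"
    using assms(2) by (intro incseq_SucI le_funI) (auto simp: indicator_def intro!: ennreal_leI)
  moreover have "?G n \<in> borel_measurable lborel" for n
    by measurable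
  ultimately have "(\<integral>\<^sup>+z. (SUP n. ?G n z) \<partial>lborel) = (SUP n. \<integral>\<^sup>+z. ?G n z \<partial>lborel)"
    by (intro nn_integral_monotone_convergence_SUP) auto
  moreover have "(SUP n. ?G n z) = ennreal (F z)" for z
  proof (rule antisym)
    show "(SUP n. ?G n z) \<le> ennreal (F z)"
      using assms(2) by (intro SUP_least) (auto simp: indicator_def intro!: ennreal_leI)
    obtain n :: nat where "norm z \<le> real n"
      using real_arch_simple by blast
    then show "ennreal (F z) \<le> (SUP n. ?G n z)"
      by (intro SUP_upper2[of n]) simp_all
  qed
  ultimately show ?thesis
    by simp
qed

lemma SUP_disc_moment:
  assumes "\<alpha> > 0"
  shows "(SUP n. ennreal (disc_moment \<alpha> (real n) k)) = ennreal (gauss_moment \<alpha> k)"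
proof -
  have "(\<lambda>z::complex. (cmod z) ^ (2 * k) * gauss_weight \<alpha> z) \<in> borel_measurable borel"
    by (intro borel_measurable_continuous_onI continuous_intros)
  from nn_integral_eq_SUP_cball[OF this] show ?thesis
    using assms by (simp add: ennreal_disc_moment nn_integral_gauss_moment gauss_weight_pos less_imp_le)
qed

lemma parseval_gauss:
  fixes c :: "nat \<Rightarrow> complex"
  assumes \<alpha>: "\<alpha> > 0" and c: "entire_coeffs c"
  shows "(\<integral>\<^sup>+z. ennreal ((cmod (\<Sum>k. c k * z ^ k))\<^sup>2 * gauss_weight \<alpha> z) \<partial>lborel)
      = (\<Sum>k. ennreal ((cmod (c k))\<^sup>2 * gauss_moment \<alpha> k))"
proof -
  define F where "F z = (cmod (\<Sum>k. c k * z ^ k))\<^sup>2 * gauss_weight \<alpha> z" for z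
  have F_meas: "F \<in> borel_measurable borel"
    unfolding F_def using c by measurable
  have F_nonneg: "F z \<ge> 0" for z
    by (simp add: F_def gauss_weight_pos less_imp_le)
  have disc: "(\<integral>\<^sup>+z. ennreal (F z * indicator (cball 0 R) z) \<partial>lborel)
      = (\<Sum>k. ennreal ((cmod (c k))\<^sup>2) * ennreal (disc_moment \<alpha> R k))" for R
  proof -
    note parseval = parseval_disc[OF less_imp_le[OF \<alpha>] c, where R=R, folded F_def]
    have "(\<integral>\<^sup>+z. ennreal (F z * indicator (cball 0 R) z) \<partial>lborel)
        = ennreal (\<integral>z. F z * indicator (cball 0 R) z \<partial>lborel)"
      using parseval(1) F_nonneg by (intro nn_integral_eq_integral AE_I2) (auto simp: F_def)
    also have "\<dots> = (\<Sum>k. ennreal ((cmod (c k))\<^sup>2 * disc_moment \<alpha> R k))"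
      using parseval(2) by (intro suminf_ennreal_eq[symmetric]) (auto simp: F_def)
    finally show ?thesis
      by (simp add: ennreal_mult)
  qed
  have mono: "incseq (\<lambda>n. ennreal (disc_moment \<alpha> (real n) k))" for k
    using \<alpha> by (intro incseq_SucI)
      (auto simp: ennreal_disc_moment indicator_def gauss_weight_pos less_imp_le
        intro!: nn_integral_mono ennreal_leI mult_nonneg_nonneg)
  have "(\<integral>\<^sup>+z. ennreal (F z) \<partial>lborel)
      = (SUP n. \<Sum>k. ennreal ((cmod (c k))\<^sup>2) * ennreal (disc_moment \<alpha> (real n) k))"
    by (simp add: nn_integral_eq_SUP_cball[OF F_meas F_nonneg] disc)
  also have "\<dots> = (\<Sum>k. SUP n. ennreal ((cmod (c k))\<^sup>2) * ennreal (disc_moment \<alpha> (real n) k))"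
    using mono by (intro ennreal_suminf_SUP_eq[symmetric]) (auto simp: incseq_def intro!: mult_left_mono)
  also have "\<dots> = (\<Sum>k. ennreal ((cmod (c k))\<^sup>2) * ennreal (gauss_moment \<alpha> k))"
    by (simp add: SUP_disc_moment[OF \<alpha>] flip: SUP_mult_left_ennreal)
  finally show ?thesis
    by (simp add: F_def ennreal_mult)
qed

section \<open>The Fock space in terms of Taylor coefficients\<close>

definition taylor_coeff :: "(complex \<Rightarrow> complex) \<Rightarrow> nat \<Rightarrow> complex" where
  "taylor_coeff f k = (deriv ^^ k) f 0 / fact k"

lemma taylor_coeff_sums:
  assumes "f holomorphic_on UNIV"
  shows "(\<lambda>k. taylor_coeff f k * z ^ k) sums f z"
proof -
  have "f holomorphic_on ball 0 (cmod z + 1)"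
    using assms by (rule holomorphic_on_subset) auto
  from holomorphic_power_series[OF this, of z] show ?thesis
    by (simp add: taylor_coeff_def)
qed

lemma entire_coeffs_taylor_coeff:
  assumes "f holomorphic_on UNIV"
  shows "entire_coeffs (taylor_coeff f)"
  unfolding entire_coeffs_def
proof (intro allI impI)
  fix R :: real
  assume R: "R \<ge> 0"
  have "summable (\<lambda>k. taylor_coeff f k * (of_real (R + 1)) ^ k)"
    using taylor_coeff_sums[OF assms] sums_summable by blast
  from powser_insidea[OF this, of "of_real R"] R show "summable (\<lambda>k. cmod (taylor_coeff f k) * R ^ k)"
    by (simp add: norm_mult norm_power)
qed

text \<open>Square-summability against the Gaussian moments forces \<open>\<bar>c k\<bar> \<rho>\<^sup>k\<close> to be bounded for every \<open>\<rho>\<close>.\<close>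
lemma entire_coeffs_if_summable_gauss:
  assumes \<alpha>: "\<alpha> > 0" and c: "summable (\<lambda>k. (cmod (c k))\<^sup>2 * gauss_moment \<alpha> k)"
  shows "entire_coeffs c"
  unfolding entire_coeffs_def
proof (intro allI impI)
  fix R :: real
  assume R: "R \<ge> 0"
  obtain m where m: "m > 0" "\<And>k. (R + 1) ^ (2 * k) * m \<le> gauss_moment \<alpha> k"
    using gauss_moment_lower_bound[OF \<alpha>, of "R + 1"] R by auto
  define B where "B = (\<Sum>k. (cmod (c k))\<^sup>2 * gauss_moment \<alpha> k)"
  have "(cmod (c k) * (R + 1) ^ k)\<^sup>2 \<le> B / m" for k
  proof -
    have "(cmod (c k) * (R + 1) ^ k)\<^sup>2 * m = (cmod (c k))\<^sup>2 * ((R + 1) ^ (2 * k) * m)"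
      by (simp add: power_mult_distrib power_mult[symmetric] mult.commute)
    also have "\<dots> \<le> (cmod (c k))\<^sup>2 * gauss_moment \<alpha> k"
      by (intro mult_left_mono m(2)) simp
    also have "\<dots> \<le> B"
      unfolding B_def using sum_le_suminf[OF c, of "{k}"] by simp
    finally show ?thesis
      using m(1) by (simp add: field_simps)
  qed
  then have bound: "cmod (c k) * (R + 1) ^ k \<le> sqrt (B / m)" for k
    using real_le_rsqrt by blast
  have "summable (\<lambda>k. sqrt (B / m) * (R / (R + 1)) ^ k)"
    using R by (intro summable_mult summable_geometric) simp
  then show "summable (\<lambda>k. cmod (c k) * R ^ k)"
  proof (rule summable_comparison_test')
    fix k
    have "cmod (c k) * R ^ k = (cmod (c k) * (R + 1) ^ k) * (R / (R + 1)) ^ k"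
      using R by (simp add: power_divide)
    also have "\<dots> \<le> sqrt (B / m) * (R / (R + 1)) ^ k"
      using bound[of k] R by (intro mult_right_mono) auto
    finally show "norm (cmod (c k) * R ^ k) \<le> sqrt (B / m) * (R / (R + 1)) ^ k"
      using R by simp
  qed
qed

lemma fock_space_power_series:
  assumes \<alpha>: "\<alpha> > 0" and c: "summable (\<lambda>k. (cmod (c k))\<^sup>2 * gauss_moment \<alpha> k)"
  shows "(\<lambda>z. \<Sum>k. c k * z ^ k) \<in> fock_space \<alpha>"
    and "fock_norm \<alpha> (\<lambda>z. \<Sum>k. c k * z ^ k) = sqrt (\<alpha> / pi * (\<Sum>k. (cmod (c k))\<^sup>2 * gauss_moment \<alpha> k))"
proof -
  have entire: "entire_coeffs c"
    by (rule entire_coeffs_if_summable_gauss[OF assms])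
  define f where "f = (\<lambda>z. \<Sum>k. c k * z ^ k)"
  have [measurable]: "f \<in> borel_measurable borel"
    unfolding f_def using entire by measurable
  have "(\<integral>\<^sup>+z. ennreal ((cmod (f z))\<^sup>2 * gauss_weight \<alpha> z) \<partial>lborel)
      = ennreal (\<Sum>k. (cmod (c k))\<^sup>2 * gauss_moment \<alpha> k)"
    unfolding f_def parseval_gauss[OF \<alpha> entire] using c by (simp add: suminf_ennreal2)
  then have "integrable lborel (\<lambda>z. (cmod (f z))\<^sup>2 * gauss_weight \<alpha> z)
      \<and> integral\<^sup>L lborel (\<lambda>z. (cmod (f z))\<^sup>2 * gauss_weight \<alpha> z) = (\<Sum>k. (cmod (c k))\<^sup>2 * gauss_moment \<alpha> k)"
    using c by (subst (asm) nn_integral_eq_integrable)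
      (auto simp: gauss_weight_pos less_imp_le intro!: suminf_nonneg)
  moreover have "f holomorphic_on UNIV"
    unfolding f_def by (rule holomorphic_on_power_series[OF entire])
  ultimately show "(\<lambda>z. \<Sum>k. c k * z ^ k) \<in> fock_space \<alpha>"
    and "fock_norm \<alpha> (\<lambda>z. \<Sum>k. c k * z ^ k) = sqrt (\<alpha> / pi * (\<Sum>k. (cmod (c k))\<^sup>2 * gauss_moment \<alpha> k))"
    by (simp_all add: fock_space_def fock_norm_def gauss_weight_def f_def)
qed

lemma fock_space_taylor_coeff:
  assumes \<alpha>: "\<alpha> > 0" and f: "f \<in> fock_space \<alpha>"
  shows "f = (\<lambda>z. \<Sum>k. taylor_coeff f k * z ^ k)"
    and "summable (\<lambda>k. (cmod (taylor_coeff f k))\<^sup>2 * gauss_moment \<alpha> k)"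
proof -
  have hol: "f holomorphic_on UNIV"
    using f by (simp add: fock_space_def)
  have f_eq: "f z = (\<Sum>k. taylor_coeff f k * z ^ k)" for z
    using taylor_coeff_sums[OF hol] by (simp add: sums_iff)
  then show "f = (\<lambda>z. \<Sum>k. taylor_coeff f k * z ^ k)"
    by auto
  have "integrable lborel (\<lambda>z. (cmod (f z))\<^sup>2 * gauss_weight \<alpha> z)"
    using f by (simp add: fock_space_def gauss_weight_def)
  then have "(\<integral>\<^sup>+z. ennreal ((cmod (f z))\<^sup>2 * gauss_weight \<alpha> z) \<partial>lborel) \<noteq> \<infinity>"
    by (subst nn_integral_eq_integral) (auto simp: gauss_weight_pos less_imp_le)
  then have "(\<Sum>k. ennreal ((cmod (taylor_coeff f k))\<^sup>2 * gauss_moment \<alpha> k)) \<noteq> top"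
    using parseval_gauss[OF \<alpha> entire_coeffs_taylor_coeff[OF hol]] by (simp flip: f_eq)
  then show "summable (\<lambda>k. (cmod (taylor_coeff f k))\<^sup>2 * gauss_moment \<alpha> k)"
    by (rule summable_suminf_not_top[rotated]) simp
qed

lemma fock_norm_diff_power_series:
  assumes \<alpha>: "\<alpha> > 0"
    and c: "summable (\<lambda>k. (cmod (c k))\<^sup>2 * gauss_moment \<alpha> k)"
    and d: "summable (\<lambda>k. (cmod (d k))\<^sup>2 * gauss_moment \<alpha> k)"
  shows "fock_norm \<alpha> ((\<lambda>z. \<Sum>k. c k * z ^ k) - (\<lambda>z. \<Sum>k. d k * z ^ k))
    = sqrt (\<alpha> / pi * (\<Sum>k. (cmod (c k - d k))\<^sup>2 * gauss_moment \<alpha> k))"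
proof -
  have "summable (\<lambda>k. c k * z ^ k)" "summable (\<lambda>k. d k * z ^ k)" for z
    using entire_coeffs_if_summable_gauss[OF \<alpha>] c d
    by (blast intro: summable_norm_cancel entire_coeffs_summable_norm)+
  then have "(\<lambda>z. \<Sum>k. c k * z ^ k) - (\<lambda>z. \<Sum>k. d k * z ^ k) = (\<lambda>z. \<Sum>k. (c k - d k) * z ^ k)"
    by (simp add: fun_eq_iff suminf_diff left_diff_distrib)
  then show ?thesis
    using fock_space_power_series(2)[OF \<alpha> summable_weighted_diff(1)[OF _ c d]] by simp
qed

lemma fock_norm_taylor_coeff:
  assumes "\<alpha> > 0" "f \<in> fock_space \<alpha>"
  shows "fock_norm \<alpha> f = sqrt (\<alpha> / pi * (\<Sum>k. (cmod (taylor_coeff f k))\<^sup>2 * gauss_moment \<alpha> k))"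
proof -
  have f: "(\<lambda>z. \<Sum>k. taylor_coeff f k * z ^ k) = f"
    by (rule fock_space_taylor_coeff(1)[OF assms, symmetric])
  show ?thesis
    using fock_space_power_series(2)[OF assms(1) fock_space_taylor_coeff(2)[OF assms]] unfolding f .
qed

lemma bounded_fock_norm_imp_coeff_bound:
  assumes \<alpha>: "\<alpha> > 0" and fs: "\<And>n. fs n \<in> fock_space \<alpha>"
    and bounded: "bounded (range (\<lambda>n. fock_norm \<alpha> (fs n)))"
  obtains C where "\<And>n. (\<Sum>k. (cmod (taylor_coeff (fs n) k))\<^sup>2 * gauss_moment \<alpha> k) \<le> C"
proof -
  obtain B where B: "\<And>n. fock_norm \<alpha> (fs n) \<le> B"
  proof -
    from bounded obtain B where "\<forall>x\<in>range (\<lambda>n. fock_norm \<alpha> (fs n)). norm x \<le> B"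
      unfolding bounded_iff by blast
    then have "fock_norm \<alpha> (fs n) \<le> B" for n
      using abs_le_D1 by auto
    then show ?thesis
      using that by blast
  qed
  have "(\<Sum>k. (cmod (taylor_coeff (fs n) k))\<^sup>2 * gauss_moment \<alpha> k) \<le> pi / \<alpha> * B\<^sup>2" for n
  proof -
    have "\<alpha> / pi * (\<Sum>k. (cmod (taylor_coeff (fs n) k))\<^sup>2 * gauss_moment \<alpha> k) \<le> B\<^sup>2"
      using B[of n] fock_norm_taylor_coeff[OF \<alpha> fs] by (intro sqrt_le_D) simp
    then show ?thesis
      using \<alpha> by (simp add: field_simps)
  qed
  then show ?thesis
    by (rule that)
qed

definition unit_monomial :: "real \<Rightarrow> nat \<Rightarrow> nat \<Rightarrow> complex" where
  "unit_monomial \<alpha> n k = (if k = n then of_real (1 / sqrt (gauss_moment \<alpha> n)) else 0)"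

lemma summable_unit_monomial: "summable (\<lambda>k. (cmod (unit_monomial \<alpha> n k))\<^sup>2 * gauss_moment \<alpha> k)"
  by (rule summable_finite[of "{n}"]) (auto simp: unit_monomial_def)

lemma fock_norm_unit_monomial:
  assumes "\<alpha> > 0"
  shows "fock_norm \<alpha> (\<lambda>z. \<Sum>k. unit_monomial \<alpha> n k * z ^ k) = sqrt (\<alpha> / pi)"
proof -
  have "(\<Sum>k. (cmod (unit_monomial \<alpha> n k))\<^sup>2 * gauss_moment \<alpha> k)
      = (\<Sum>k\<in>{n}. (cmod (unit_monomial \<alpha> n k))\<^sup>2 * gauss_moment \<alpha> k)"
    by (rule suminf_finite) (auto simp: unit_monomial_def)
  also have "\<dots> = 1"
    using gauss_moment_pos[OF assms, of n] by (simp add: unit_monomial_def norm_divide power_divide)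
  finally show ?thesis
    unfolding fock_space_power_series(2)[OF assms summable_unit_monomial] by simp
qed

section \<open>The Hausdorff operator as a diagonal operator\<close>

definition hausdorff_moment :: "real measure \<Rightarrow> nat \<Rightarrow> real" where
  "hausdorff_moment \<mu> n = (\<integral>t. indicator {1..} t / t ^ (n + 1) \<partial>\<mu>)"

lemma hausdorff_weight_bounds:
  fixes t :: real
  shows "0 \<le> indicator {1..} t / t ^ (k + 1) \<and> indicator {1..} t / t ^ (k + 1) \<le> 1"
proof (cases "1 \<le> t")
  case True
  then have "1 \<le> t ^ (k + 1)"
    by (rule one_le_power)
  then show ?thesis
    using True by (simp add: indicator_def field_simps)
qed (simp add: indicator_def)

locale hausdorff_measure =
  fixes \<mu> :: "real measure"
  assumes sets_eq[measurable_cong]: "sets \<mu> = sets borel"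
    and null_0_1: "emeasure \<mu> {0<..<1} = 0"
    and nn_integral_inverse_finite: "(\<integral>\<^sup>+t. ennreal (1 / t) * indicator {1..} t \<partial>\<mu>) < \<infinity>"
begin

lemma nn_integral_indicator_inverse_power:
  "(\<integral>\<^sup>+t. ennreal (1 / t ^ (n + 1)) * indicator {1..} t \<partial>\<mu>)
    = (\<integral>\<^sup>+t. ennreal (indicator {1..} t / t ^ (n + 1)) \<partial>\<mu>)"
  by (intro nn_integral_cong) (simp add: indicator_def)

lemma integrable_hausdorff_weight: "integrable \<mu> (\<lambda>t. indicator {1..} t / t ^ (n + 1))"
proof (rule integrableI_bounded)
  have le: "1 / t ^ (n + 1) \<le> 1 / t" if "1 \<le> t" for t :: real
  proof -
    have "t ^ 1 \<le> t ^ (n + 1)"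
      using that by (intro power_increasing) auto
    then show ?thesis
      using that by (intro divide_left_mono) auto
  qed
  have "ennreal (norm (indicator {1..} t / t ^ (n + 1) :: real)) \<le> ennreal (1 / t) * indicator {1..} t" for t
    using le[of t] by (cases "1 \<le> t") (auto simp: indicator_def abs_of_nonneg intro!: ennreal_leI)
  then have "(\<integral>\<^sup>+t. ennreal (norm (indicator {1..} t / t ^ (n + 1) :: real)) \<partial>\<mu>)
      \<le> (\<integral>\<^sup>+t. ennreal (1 / t) * indicator {1..} t \<partial>\<mu>)"
    by (rule nn_integral_mono)
  then show "(\<integral>\<^sup>+t. ennreal (norm (indicator {1..} t / t ^ (n + 1) :: real)) \<partial>\<mu>) < \<infinity>"
    using nn_integral_inverse_finite by (rule le_less_trans)
qed simp

lemma hausdorff_moment_nonneg: "hausdorff_moment \<mu> n \<ge> 0"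
  unfolding hausdorff_moment_def by (intro integral_nonneg_AE AE_I2) (simp add: indicator_def)

lemma ennreal_hausdorff_moment:
  "ennreal (hausdorff_moment \<mu> n) = (\<integral>\<^sup>+t. ennreal (1 / t ^ (n + 1)) * indicator {1..} t \<partial>\<mu>)"
  unfolding nn_integral_indicator_inverse_power hausdorff_moment_def
  by (intro nn_integral_eq_integral[symmetric] integrable_hausdorff_weight AE_I2) (simp add: indicator_def)

lemma decseq_hausdorff_moment: "decseq (hausdorff_moment \<mu>)"
  unfolding hausdorff_moment_def
  by (intro decseq_SucI integral_mono integrable_hausdorff_weight)
    (auto simp: indicator_def intro!: divide_left_mono mult_pos_pos)

lemma hausdorff_moment_le_0: "hausdorff_moment \<mu> n \<le> hausdorff_moment \<mu> 0"
  using decseq_hausdorff_moment by (simp add: decseq_def)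

text \<open>On \<open>[1, \<infinity>)\<close> the \<open>k\<close>-th term is bounded by \<open>\<bar>c k z\<^sup>k\<bar>\<close>, and its integral by \<open>\<bar>c k z\<^sup>k\<bar>\<close> times
  the zeroth moment, so the series may be integrated term by term.\<close>
lemma integral_hausdorff_power_series:
  assumes c: "entire_coeffs c"
  shows "(\<integral>t. (\<Sum>k. c k * z ^ k * of_real (indicator {1..} t / t ^ (k + 1))) \<partial>\<mu>)
    = (\<Sum>k. of_real (hausdorff_moment \<mu> k) * c k * z ^ k)"
proof -
  define g where "g k t = c k * z ^ k * of_real (indicator {1..} t / t ^ (k + 1))" for k t
  have "(\<integral>t. (\<Sum>k. g k t) \<partial>\<mu>) = (\<Sum>k. integral\<^sup>L \<mu> (g k))"
  proof (rule integral_suminf)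
    show "integrable \<mu> (g k)" for k
      unfolding g_def by (intro integrable_mult_right integrable_of_real integrable_hausdorff_weight)
    have norm_g: "norm (g k t) = norm (c k * z ^ k) * (indicator {1..} t / t ^ (k + 1))" for k t
      unfolding g_def norm_mult norm_of_real by (simp only: abs_of_nonneg[OF conjunct1[OF hausdorff_weight_bounds]])
    show "AE t in \<mu>. summable (\<lambda>k. norm (g k t))"
    proof (intro AE_I2 summable_comparison_test'[OF entire_coeffs_summable_norm[OF c, of z]])
      fix t k
      assume "t \<in> space \<mu>"
      have "norm (g k t) \<le> norm (c k * z ^ k)"
        unfolding norm_g using hausdorff_weight_bounds[of t k] by (intro mult_left_le) auto
      then show "norm (norm (g k t)) \<le> norm (c k * z ^ k)"
        by simp
    qed
    have "(\<integral>t. norm (g k t) \<partial>\<mu>) \<le> norm (c k * z ^ k) * hausdorff_moment \<mu> 0" for k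
    proof -
      have "(\<integral>t. norm (g k t) \<partial>\<mu>) = norm (c k * z ^ k) * hausdorff_moment \<mu> k"
        by (simp only: norm_g hausdorff_moment_def integral_mult_right_zero)
      then show ?thesis
        using hausdorff_moment_le_0 by (simp add: mult_left_mono)
    qed
    then show "summable (\<lambda>k. \<integral>t. norm (g k t) \<partial>\<mu>)"
      by (intro summable_comparison_test'[OF summable_mult2[OF entire_coeffs_summable_norm[OF c]]])
        (simp add: integral_nonneg_AE)
  qed
  also have "\<dots> = (\<Sum>k. of_real (hausdorff_moment \<mu> k) * c k * z ^ k)"
  proof (rule suminf_cong)
    fix k
    have "integral\<^sup>L \<mu> (g k) = c k * z ^ k * of_real (hausdorff_moment \<mu> k)"
      unfolding g_def hausdorff_moment_def integral_mult_right_zero integral_complex_of_real ..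
    then show "integral\<^sup>L \<mu> (g k) = of_real (hausdorff_moment \<mu> k) * c k * z ^ k"
      by (simp add: ac_simps)
  qed
  finally show ?thesis
    by (simp only: g_def)
qed

lemma hausdorff_op_power_series:
  assumes c: "entire_coeffs c"
  shows "hausdorff_op \<mu> (\<lambda>w. \<Sum>k. c k * w ^ k) = (\<lambda>z. \<Sum>k. of_real (hausdorff_moment \<mu> k) * c k * z ^ k)"
proof (rule ext)
  fix z
  define g where "g k t = c k * z ^ k * of_real (indicator {1..} t / t ^ (k + 1))" for k t
  have [measurable]: "(\<lambda>w. \<Sum>k. c k * w ^ k) \<in> borel_measurable borel"
    using c by measurable
  have "{0<..<1} \<in> null_sets \<mu>"
    using null_0_1 by (simp add: null_sets_def sets_eq)
  then have "AE t in \<mu>. t \<notin> {0<..<1}"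
    by (rule AE_not_in)
  then have "AE t in \<mu>. indicator {0<..} t *\<^sub>R ((\<Sum>k. c k * (z / of_real t) ^ k) / of_real t) = (\<Sum>k. g k t)"
  proof eventually_elim
    case (elim t)
    show ?case
    proof (cases "t \<ge> 1")
      case True
      have "summable (\<lambda>k. c k * (z / of_real t) ^ k)"
        using summable_norm_cancel[OF entire_coeffs_summable_norm[OF c]] .
      then show ?thesis
        using True by (simp add: g_def suminf_divide[symmetric] power_divide field_simps)
    qed (use elim in \<open>auto simp: g_def not_le\<close>)
  qed
  then have "hausdorff_op \<mu> (\<lambda>w. \<Sum>k. c k * w ^ k) z = (\<integral>t. (\<Sum>k. g k t) \<partial>\<mu>)"
    unfolding hausdorff_op_def set_lebesgue_integral_def
    by (intro integral_cong_AE) (simp_all add: g_def)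
  then show "hausdorff_op \<mu> (\<lambda>w. \<Sum>k. c k * w ^ k) z = (\<Sum>k. of_real (hausdorff_moment \<mu> k) * c k * z ^ k)"
    unfolding g_def by (simp only: integral_hausdorff_power_series[OF c])
qed

context
  fixes \<alpha> :: real
  assumes \<alpha>: "\<alpha> > 0"
begin

lemma summable_gauss_moment_mult_hausdorff_moment:
  "summable (\<lambda>k. (cmod (c k))\<^sup>2 * gauss_moment \<alpha> k) \<Longrightarrow>
    summable (\<lambda>k. (cmod (of_real (hausdorff_moment \<mu> k) * c k))\<^sup>2 * gauss_moment \<alpha> k)"
  using hausdorff_moment_le_0 hausdorff_moment_nonneg
  by (intro summable_weighted_mult_bounded[where M="hausdorff_moment \<mu> 0"]) auto

lemma hausdorff_op_taylor_coeff:
  assumes "f \<in> fock_space \<alpha>"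
  shows "hausdorff_op \<mu> f = (\<lambda>z. \<Sum>k. of_real (hausdorff_moment \<mu> k) * taylor_coeff f k * z ^ k)"
proof -
  note f = fock_space_taylor_coeff[OF \<alpha> assms]
  have "hausdorff_op \<mu> f = hausdorff_op \<mu> (\<lambda>z. \<Sum>k. taylor_coeff f k * z ^ k)"
    by (rule arg_cong[OF f(1)])
  also have "\<dots> = (\<lambda>z. \<Sum>k. of_real (hausdorff_moment \<mu> k) * taylor_coeff f k * z ^ k)"
    by (rule hausdorff_op_power_series[OF entire_coeffs_if_summable_gauss[OF \<alpha> f(2)]])
  finally show ?thesis .
qed

lemma hausdorff_op_fock_space:
  assumes "f \<in> fock_space \<alpha>"
  shows "hausdorff_op \<mu> f \<in> fock_space \<alpha>"
  using fock_space_power_series(1)[OF \<alpha> summable_gauss_moment_mult_hausdorff_moment[OF fock_space_taylor_coeff(2)[OF \<alpha> assms]]]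
  by (simp add: hausdorff_op_taylor_coeff[OF assms] mult.assoc)

lemma compact_on_fock_if_moments_tendsto_zero:
  assumes lim: "hausdorff_moment \<mu> \<longlonglongrightarrow> 0"
  shows "compact_on_fock \<alpha> (hausdorff_op \<mu>)"
  unfolding compact_on_fock_def
proof (intro conjI ballI allI impI)
  fix f
  assume "f \<in> fock_space \<alpha>"
  then show "hausdorff_op \<mu> f \<in> fock_space \<alpha>"
    by (rule hausdorff_op_fock_space)
next
  fix fs :: "nat \<Rightarrow> complex \<Rightarrow> complex"
  assume "(\<forall>n. fs n \<in> fock_space \<alpha>) \<and> bounded (range (\<lambda>n. fock_norm \<alpha> (fs n)))"
  then have fs: "\<forall>n. fs n \<in> fock_space \<alpha>" and bounded: "bounded (range (\<lambda>n. fock_norm \<alpha> (fs n)))"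
    by auto
  obtain C where C: "\<And>n. (\<Sum>k. (cmod (taylor_coeff (fs n) k))\<^sup>2 * gauss_moment \<alpha> k) \<le> C"
    using bounded_fock_norm_imp_coeff_bound[where fs=fs, OF \<alpha> fs[rule_format] bounded] by blast
  define c where "c n = taylor_coeff (fs n)" for n
  have c: "summable (\<lambda>k. (cmod (c n k))\<^sup>2 * gauss_moment \<alpha> k)" for n
    unfolding c_def using fs by (intro fock_space_taylor_coeff(2)[OF \<alpha>]) simp
  have c_bound: "(\<Sum>k. (cmod (c n k))\<^sup>2 * gauss_moment \<alpha> k) \<le> C" for n
    using C by (simp add: c_def)
  obtain r d where r: "strict_mono r" and d: "summable (\<lambda>k. (cmod (d k))\<^sup>2 * gauss_moment \<alpha> k)"
    and conv: "(\<lambda>i. \<Sum>k. (cmod (of_real (hausdorff_moment \<mu> k) * c (r i) k - of_real (hausdorff_moment \<mu> k) * d k))\<^sup>2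
                  * gauss_moment \<alpha> k) \<longlonglongrightarrow> 0"
    using weighted_l2_diagonal_compact[where x=c and w="gauss_moment \<alpha>", OF lim gauss_moment_pos[OF \<alpha>] c c_bound]
    by blast
  define G where "G = (\<lambda>z. \<Sum>k. of_real (hausdorff_moment \<mu> k) * d k * z ^ k)"
  have "G \<in> fock_space \<alpha>"
    using fock_space_power_series(1)[OF \<alpha> summable_gauss_moment_mult_hausdorff_moment[OF d]]
    by (simp add: G_def mult.assoc)
  moreover have "fock_norm \<alpha> (hausdorff_op \<mu> (fs (r i)) - G)
      = sqrt (\<alpha> / pi * (\<Sum>k. (cmod (of_real (hausdorff_moment \<mu> k) * c (r i) k
                                    - of_real (hausdorff_moment \<mu> k) * d k))\<^sup>2 * gauss_moment \<alpha> k))" for i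
    using fock_norm_diff_power_series[OF \<alpha> summable_gauss_moment_mult_hausdorff_moment[OF c]
        summable_gauss_moment_mult_hausdorff_moment[OF d]] fs
    by (simp add: G_def c_def hausdorff_op_taylor_coeff mult.assoc)
  then have "(\<lambda>i. fock_norm \<alpha> (hausdorff_op \<mu> (fs (r i)) - G)) \<longlonglongrightarrow> sqrt (\<alpha> / pi * 0)"
    by (simp only:) (intro tendsto_intros conv)
  ultimately show "\<exists>r g. strict_mono r \<and> g \<in> fock_space \<alpha>
      \<and> (\<lambda>k. fock_norm \<alpha> (hausdorff_op \<mu> (fs (r k)) - g)) \<longlonglongrightarrow> 0"
    using r by auto
qed

lemma hausdorff_moment_le_dist:
  assumes G: "G \<in> fock_space \<alpha>"
  shows "hausdorff_moment \<mu> n \<le> cmod (taylor_coeff G n) * sqrt (gauss_moment \<alpha> n)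
    + sqrt (pi / \<alpha>) * fock_norm \<alpha> (hausdorff_op \<mu> (\<lambda>z. \<Sum>k. unit_monomial \<alpha> n k * z ^ k) - G)"
proof -
  define d where "d = taylor_coeff G"
  define u where "u k = of_real (hausdorff_moment \<mu> k) * unit_monomial \<alpha> n k" for k
  have d: "summable (\<lambda>k. (cmod (d k))\<^sup>2 * gauss_moment \<alpha> k)"
    unfolding d_def by (rule fock_space_taylor_coeff(2)[OF \<alpha> G])
  have u: "summable (\<lambda>k. (cmod (u k))\<^sup>2 * gauss_moment \<alpha> k)"
    unfolding u_def by (rule summable_gauss_moment_mult_hausdorff_moment[OF summable_unit_monomial])
  have H: "hausdorff_op \<mu> (\<lambda>z. \<Sum>k. unit_monomial \<alpha> n k * z ^ k) = (\<lambda>z. \<Sum>k. u k * z ^ k)"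
    unfolding u_def
    by (rule hausdorff_op_power_series[OF entire_coeffs_if_summable_gauss[OF \<alpha> summable_unit_monomial]])
  have G_eq: "G = (\<lambda>z. \<Sum>k. d k * z ^ k)"
    unfolding d_def by (rule fock_space_taylor_coeff(1)[OF \<alpha> G])
  have "pi / \<alpha> * (\<alpha> / pi * S) = S" for S
    using \<alpha> by (simp add: field_simps)
  then have "sqrt (pi / \<alpha>) * fock_norm \<alpha> (hausdorff_op \<mu> (\<lambda>z. \<Sum>k. unit_monomial \<alpha> n k * z ^ k) - G)
      = sqrt (\<Sum>k. (cmod (u k - d k))\<^sup>2 * gauss_moment \<alpha> k)"
    unfolding H G_eq fock_norm_diff_power_series[OF \<alpha> u d] by (simp add: real_sqrt_mult[symmetric])
  moreover have "cmod (u n) * sqrt (gauss_moment \<alpha> n) = hausdorff_moment \<mu> n"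
    using gauss_moment_pos[OF \<alpha>, of n] hausdorff_moment_nonneg
    by (simp add: u_def unit_monomial_def norm_mult norm_divide abs_of_nonneg)
  ultimately show ?thesis
    using weighted_coordinate_le_dist[OF gauss_moment_nonneg summable_weighted_diff(1)[OF gauss_moment_nonneg u d], of n]
    by (simp add: d_def)
qed

text \<open>The images \<open>a\<^sub>n e\<^sub>n\<close> of the normalised monomials \<open>e\<^sub>n\<close> converge along a subsequence to some \<open>G\<close>,
  whose \<open>n\<close>-th coefficient tends to zero; hence so does \<open>a\<^sub>n\<close> along that subsequence.\<close>
lemma moments_tendsto_zero_if_compact_on_fock:
  assumes compact: "compact_on_fock \<alpha> (hausdorff_op \<mu>)"
  shows "hausdorff_moment \<mu> \<longlonglongrightarrow> 0"
proof -
  define fs where "fs n = (\<lambda>z. \<Sum>k. unit_monomial \<alpha> n k * z ^ k)" for n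
  have "range (\<lambda>n. fock_norm \<alpha> (fs n)) = {sqrt (\<alpha> / pi)}"
    by (auto simp: fs_def fock_norm_unit_monomial[OF \<alpha>])
  then have "bounded (range (\<lambda>n. fock_norm \<alpha> (fs n)))"
    by simp
  moreover have "\<forall>n. fs n \<in> fock_space \<alpha>"
    unfolding fs_def by (intro allI fock_space_power_series(1)[OF \<alpha> summable_unit_monomial])
  ultimately obtain r G where r: "strict_mono r" and G: "G \<in> fock_space \<alpha>"
    and lim: "(\<lambda>i. fock_norm \<alpha> (hausdorff_op \<mu> (fs (r i)) - G)) \<longlonglongrightarrow> 0"
    using compact unfolding compact_on_fock_def by blast
  define d where "d = taylor_coeff G"
  have "(\<lambda>k. cmod (d k) * sqrt (gauss_moment \<alpha> k)) \<longlonglongrightarrow> 0"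
    using tendsto_real_sqrt[OF summable_LIMSEQ_zero[OF fock_space_taylor_coeff(2)[OF \<alpha> G]]]
    by (simp add: d_def real_sqrt_mult)
  from LIMSEQ_subseq_LIMSEQ[OF this r]
  have "(\<lambda>i. cmod (d (r i)) * sqrt (gauss_moment \<alpha> (r i))) \<longlonglongrightarrow> 0"
    by (simp add: o_def)
  then have "(\<lambda>i. cmod (d (r i)) * sqrt (gauss_moment \<alpha> (r i))
      + sqrt (pi / \<alpha>) * fock_norm \<alpha> (hausdorff_op \<mu> (fs (r i)) - G)) \<longlonglongrightarrow> 0 + sqrt (pi / \<alpha>) * 0"
    by (intro tendsto_add tendsto_mult tendsto_const lim)
  then have upper: "(\<lambda>i. cmod (d (r i)) * sqrt (gauss_moment \<alpha> (r i))
      + sqrt (pi / \<alpha>) * fock_norm \<alpha> (hausdorff_op \<mu> (fs (r i)) - G)) \<longlonglongrightarrow> 0"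
    by simp
  have "(\<lambda>i. hausdorff_moment \<mu> (r i)) \<longlonglongrightarrow> 0"
  proof (rule tendsto_sandwich)
    show "\<forall>\<^sub>F i in sequentially. 0 \<le> hausdorff_moment \<mu> (r i)"
      by (simp add: hausdorff_moment_nonneg)
    show "\<forall>\<^sub>F i in sequentially. hausdorff_moment \<mu> (r i) \<le> cmod (d (r i)) * sqrt (gauss_moment \<alpha> (r i))
        + sqrt (pi / \<alpha>) * fock_norm \<alpha> (hausdorff_op \<mu> (fs (r i)) - G)"
      unfolding fs_def d_def by (intro always_eventually allI hausdorff_moment_le_dist[OF G])
  qed (simp_all add: upper)
  then have "(hausdorff_moment \<mu> \<circ> r) \<longlonglongrightarrow> 0"
    by (simp add: o_def)
  moreover have "bdd_below (range (hausdorff_moment \<mu>))"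
    by (intro bdd_belowI[where m=0]) (auto simp: hausdorff_moment_nonneg)
  ultimately show ?thesis
    by (rule decseq_tendsto_if_subseq_tendsto[OF decseq_hausdorff_moment _ r, rotated])
qed

end

end

theorem theorem2:
  fixes \<alpha> :: real and \<mu> :: "real measure"
  assumes "\<alpha> > 0"
    and "sets \<mu> = sets borel"
    and "emeasure \<mu> {..0} = 0"
    and "emeasure \<mu> {0<..<1} = 0"
    and "(SUP n::nat. \<integral>\<^sup>+ t. ennreal (1 / t ^ (n + 1)) * indicator {1..} t \<partial>\<mu>) < \<infinity>"
  shows "compact_on_fock \<alpha> (hausdorff_op \<mu>) \<longleftrightarrow>
         (\<lambda>n::nat. \<integral>\<^sup>+ t. ennreal (1 / t ^ (n + 1)) * indicator {1..} t \<partial>\<mu>) \<longlonglongrightarrow> 0"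
proof -
  have "(\<integral>\<^sup>+t. ennreal (1 / t ^ (0 + 1)) * indicator {1..} t \<partial>\<mu>) < \<infinity>"
    using assms(5) by (rule le_less_trans[OF SUP_upper, rotated]) simp
  then interpret hausdorff_measure \<mu>
    using assms(2,4) by unfold_locales simp_all
  have "(\<lambda>n. \<integral>\<^sup>+ t. ennreal (1 / t ^ (n + 1)) * indicator {1..} t \<partial>\<mu>) = (\<lambda>n. ennreal (hausdorff_moment \<mu> n))"
    by (simp add: ennreal_hausdorff_moment)
  then show ?thesis
    using compact_on_fock_if_moments_tendsto_zero[OF assms(1)]
      moments_tendsto_zero_if_compact_on_fock[OF assms(1)]
    by (auto simp: ennreal_tendsto_0_iff hausdorff_moment_nonneg)
qed

end
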